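(* Assume the Standing Setting and let $\theta\in\mathbb{R}^{\mathfrak d}$ and $\Theta^1,\Theta^2\in C([0,\infty),\mathbb{R}^{\mathfrak d})$ satisfy for all $t\in[0,\infty)$, $s\in[t,\infty)$, $k\in\{1,2\}$ that $\Theta^k_t=\theta-\int_0^t\mathcal G(\Theta^k_u)\,\mathrm du$ and $\mathbf D^{\Theta^k_t}\subseteq\mathbf D^{\Theta^k_s}$. Then $\Theta^1_t=\Theta^2_t$ for all $t\in[0,\infty)$.
   Context: Standing Setting: Let $d,H,\mathfrak d\in\mathbb{N}$ with $\mathfrak d=dH+2H+1$, let $a\in\mathbb{R}$, $b\in(a,\infty)$, $f\in C([a,b]^d,\mathbb{R})$, and let $p\colon[a,b]^d\to[0,\infty)$ be bounded and measurable. Let $\lambda$ be Lebesgue measure on $\mathbb{R}^d$ and $\|\cdot\|$ the Euclidean norm. For $\theta=(\theta_1,\dots,\theta_{\mathfrak d})\in\mathbb{R}^{\mathfrak d}$, $i\in\{1,\dots,H\}$, $j\in\{1,\dots,d\}$ write $w^\theta_{i,j}=\theta_{(i-1)d+j}$, $b^\theta_i=\theta_{Hd+i}$, $v^\theta_i=\theta_{H(d+1)+i}$, $c^\theta=\theta_{\mathfrak d}$. Define $\mathcal N^\theta(x)=c^\theta+\sum_{i=1}^H v^\theta_i\max\{b^\theta_i+\sum_{j=1}^d w^\theta_{i,j}x_j,0\}$ for $x\in\mathbb{R}^d$ and the risk $\mathcal L(\theta)=\int_{[a,b]^d}(f(y)-\mathcal N^\theta(y))^2p(y)\,\lambda(\mathrm{d}y)$.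 Let $\mathfrak R_r\in C^1(\mathbb{R},\mathbb{R})$, $r\in\mathbb{N}$, satisfy for all $x\in\mathbb{R}$ that $\lim_{r\to\infty}\big(|\mathfrak R_r(x)-\max\{x,0\}|+|(\mathfrak R_r)'(x)-\mathbb 1_{(0,\infty)}(x)|\big)=0$ and $\sup_{r\in\mathbb{N}}\sup_{y\in[-|x|,|x|]}|(\mathfrak R_r)'(y)|<\infty$, and let $\mathfrak L_r(\theta)=\int_{[a,b]^d}\big(f(y)-c^\theta-\sum_{i=1}^H v^\theta_i\,\mathfrak R_r(b^\theta_i+\sum_{j=1}^d w^\theta_{i,j}y_j)\big)^2p(y)\,\lambda(\mathrm{d}y)$. Let $\mathcal G=(\mathcal G_1,\dots,\mathcal G_{\mathfrak d})\colon\mathbb{R}^{\mathfrak d}\to\mathbb{R}^{\mathfrak d}$ satisfy $\mathcal G(\theta)=\lim_{r\to\infty}(\nabla\mathfrak L_r)(\theta)$ for every $\theta$ at which this limit exists. For $\theta\in\mathbb{R}^{\mathfrak d}$, $i\in\{1,\dots,H\}$ let $I_i^\theta=\{x\in[a,b]^d\colon b^\theta_i+\sum_{j=1}^d w^\theta_{i,j}x_j>0\}$ and let $\mathbf D^\theta=\{i\in\{1,\dots,H\}\colon |b^\theta_i|+\sum_{j=1}^d|w^\theta_{i,j}|=0\}$ (the set of degenerate hidden neurons). For $\varepsilon>0$, $B_\varepsilon(\theta)=\{\vartheta\in\mathbb{R}^{\mathfrak d}\colon\|\theta-\vartheta\|<\varepsilon\}$. *)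

theory Defs
  imports "HOL-Analysis.Analysis"
begin

text \<open>Parameters theta in R^dd are represented as functions nat => real whose
  components 1..dd are the coordinates and which vanish outside {1..dd}.
  Inputs x in R^d are functions nat => real with coordinates x 1, ..., x d.\<close>

definition pdim :: "nat \<Rightarrow> nat \<Rightarrow> nat" where
  "pdim d H = d * H + 2 * H + 1"

definition param_space :: "nat \<Rightarrow> (nat \<Rightarrow> real) set" where
  "param_space n = {v. \<forall>i. i \<notin> {1..n} \<longrightarrow> v i = 0}"

definition wt :: "nat \<Rightarrow> (nat \<Rightarrow> real) \<Rightarrow> nat \<Rightarrow> nat \<Rightarrow> real" where
  "wt d \<theta> i j = \<theta> ((i - 1) * d + j)"

definition bs :: "nat \<Rightarrow> nat \<Rightarrow> (nat \<Rightarrow> real) \<Rightarrow> nat \<Rightarrow> real" where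
  "bs d H \<theta> i = \<theta> (H * d + i)"

definition vs :: "nat \<Rightarrow> nat \<Rightarrow> (nat \<Rightarrow> real) \<Rightarrow> nat \<Rightarrow> real" where
  "vs d H \<theta> i = \<theta> (H * (d + 1) + i)"

definition cc :: "nat \<Rightarrow> nat \<Rightarrow> (nat \<Rightarrow> real) \<Rightarrow> real" where
  "cc d H \<theta> = \<theta> (pdim d H)"

definition cube :: "nat \<Rightarrow> real \<Rightarrow> real \<Rightarrow> (nat \<Rightarrow> real) set" where
  "cube d a b = PiE {1..d} (\<lambda>_. {a..b})"

definition lebd :: "nat \<Rightarrow> (nat \<Rightarrow> real) measure" where
  "lebd d = PiM {1..d} (\<lambda>_. lborel)"

definition smooth_risk ::
  "nat \<Rightarrow> nat \<Rightarrow> real \<Rightarrow> real \<Rightarrow> ((nat \<Rightarrow> real) \<Rightarrow> real) \<Rightarrow> ((nat \<Rightarrow> real) \<Rightarrow> real)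
   \<Rightarrow> (real \<Rightarrow> real) \<Rightarrow> (nat \<Rightarrow> real) \<Rightarrow> real" where
  "smooth_risk d H a b f p Rr \<theta> =
     set_lebesgue_integral (lebd d) (cube d a b)
       (\<lambda>y. (f y - cc d H \<theta>
              - (\<Sum>i=1..H. vs d H \<theta> i * Rr (bs d H \<theta> i + (\<Sum>j=1..d. wt d \<theta> i j * y j))))\<^sup>2
            * p y)"

definition grad :: "((nat \<Rightarrow> real) \<Rightarrow> real) \<Rightarrow> (nat \<Rightarrow> real) \<Rightarrow> nat \<Rightarrow> real" where
  "grad F \<theta> i = deriv (\<lambda>s. F (\<theta>(i := s))) (\<theta> i)"

definition degen :: "nat \<Rightarrow> nat \<Rightarrow> (nat \<Rightarrow> real) \<Rightarrow> nat set" where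
  "degen d H \<theta> = {i \<in> {1..H}. \<bar>bs d H \<theta> i\<bar> + (\<Sum>j=1..d. \<bar>wt d \<theta> i j\<bar>) = 0}"

end

theory Submission
  imports Defs
begin

(* Differentiating under the integral and passing to the limit r -> oo by dominated convergence,
   the limiting gradient G is the integral of the formal gradient of the ReLU risk, in which the
   derivative of max x 0 is the Heaviside function.  Everything in it is locally Lipschitz in the
   parameters except the Heaviside factors, and for parameters phi, psi the factors of neuron i
   differ only on the switching set where the two pre-activations of neuron i have different
   signs.  If neuron i is degenerate at theta0, it stays degenerate along both flows, so this set is
   empty; otherwise a weight or the bias of neuron i is bounded away from 0 near theta0, and the
   switching set lies in two slabs of width O(|phi - psi|).  Hence G is Lipschitz along the two
   flows near every time at which they agree, and a Gronwall-type estimate at the first time they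
   separate shows that they never do. *)

lemma DERIV_abs_diff_le:
  fixes g g' :: "real \<Rightarrow> real"
  assumes "\<And>s. s \<in> {l..u} \<Longrightarrow> (g has_real_derivative g' s) (at s)"
    and "\<And>s. s \<in> {l..u} \<Longrightarrow> \<bar>g' s\<bar> \<le> B"
    and "x \<in> {l..u}" "y \<in> {l..u}"
  shows "\<bar>g x - g y\<bar> \<le> B * \<bar>x - y\<bar>"
  using field_differentiable_bound[of "{l..u}" g g' B x y] assms
  by (auto intro: has_field_derivative_at_within)

lemma DERIV_integral_dominated:
  fixes M :: "'a measure" and g g' :: "real \<Rightarrow> 'a \<Rightarrow> real"
  assumes "finite_measure M"
    and meas: "\<And>s. g s \<in> borel_measurable M" "g' x \<in> borel_measurable M"
    and int: "\<And>s. integrable M (g s)"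
    and der: "\<And>s y. y \<in> space M \<Longrightarrow> ((\<lambda>s. g s y) has_real_derivative g' s y) (at s)"
    and bnd: "\<And>s y. y \<in> space M \<Longrightarrow> \<bar>s - x\<bar> \<le> 1 \<Longrightarrow> \<bar>g' s y\<bar> \<le> B"
  shows "((\<lambda>s. \<integral>y. g s y \<partial>M) has_real_derivative (\<integral>y. g' x y \<partial>M)) (at x)"
  unfolding DERIV_def tendsto_at_iff_sequentially comp_def
proof (intro allI impI)
  interpret finite_measure M by fact
  fix X :: "nat \<Rightarrow> real"
  assume X0: "\<forall>i. X i \<in> UNIV - {0}" and X: "X \<longlonglongrightarrow> 0"
  obtain N where N: "\<And>i. i \<ge> N \<Longrightarrow> \<bar>X i\<bar> \<le> 1"
    using X unfolding LIMSEQ_def dist_real_def by (metis diff_zero le_less zero_less_one)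
  have quot_bound: "\<bar>(g (x + X i) y - g x y) / X i\<bar> \<le> B" if "y \<in> space M" "i \<ge> N" for i y
  proof -
    have "\<bar>g (x + X i) y - g x y\<bar> \<le> B * \<bar>x + X i - x\<bar>"
      by (rule DERIV_abs_diff_le[of "x - 1" "x + 1"]) (use der bnd that N[OF that(2)] in \<open>auto simp: abs_le_iff\<close>)
    then show ?thesis using X0 by (simp add: divide_le_eq)
  qed
  have lim: "(\<lambda>i. \<integral>y. (g (x + X (i + N)) y - g x y) / X (i + N) \<partial>M) \<longlonglongrightarrow> (\<integral>y. g' x y \<partial>M)"
  proof (rule integral_dominated_convergence[where w="\<lambda>_. B"])
    show "AE y in M. (\<lambda>i. (g (x + X (i + N)) y - g x y) / X (i + N)) \<longlonglongrightarrow> g' x y"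
    proof (rule AE_I2)
      fix y assume "y \<in> space M"
      then have "((\<lambda>h. (g (x + h) y - g x y) / h) \<longlongrightarrow> g' x y) (at 0)"
        using der unfolding DERIV_def by blast
      then show "(\<lambda>i. (g (x + X (i + N)) y - g x y) / X (i + N)) \<longlonglongrightarrow> g' x y"
        using X0 LIMSEQ_ignore_initial_segment[OF X, of N]
        unfolding tendsto_at_iff_sequentially comp_def by auto
    qed
  qed (use meas quot_bound in auto)
  have quotient_eq: "((\<integral>y. g (x + X i) y \<partial>M) - (\<integral>y. g x y \<partial>M)) / X i
      = (\<integral>y. (g (x + X i) y - g x y) / X i \<partial>M)" for i
    using int by simp
  show "(\<lambda>i. ((\<integral>y. g (x + X i) y \<partial>M) - (\<integral>y. g x y \<partial>M)) / X i) \<longlonglongrightarrow> (\<integral>y. g' x y \<partial>M)"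
    unfolding quotient_eq
    by (rule LIMSEQ_offset[OF lim])
qed

lemma abs_integral_le_integral:
  fixes g B :: "_ \<Rightarrow> real"
  assumes "integrable M g" "integrable M B" "\<And>x. x \<in> space M \<Longrightarrow> \<bar>g x\<bar> \<le> B x"
  shows "\<bar>integral\<^sup>L M g\<bar> \<le> integral\<^sup>L M B"
proof -
  have "(\<integral>x. \<bar>g x\<bar> \<partial>M) \<le> integral\<^sup>L M B"
    using assms by (intro integral_mono integrable_abs) auto
  then show ?thesis
    using integral_norm_bound[of M g] unfolding real_norm_def by linarith
qed

lemma abs_sum_le_card_mult:
  fixes F :: "'a \<Rightarrow> real"
  assumes "\<And>j. j \<in> S \<Longrightarrow> \<bar>F j\<bar> \<le> c"
  shows "\<bar>\<Sum>j\<in>S. F j\<bar> \<le> real (card S) * c"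
  using order_trans[OF sum_abs sum_bounded_above[of S "\<lambda>j. \<bar>F j\<bar>" c]] assms by simp

lemma abs_mult_diff_le:
  fixes u v x y :: real
  shows "\<bar>u * x - v * y\<bar> \<le> \<bar>u - v\<bar> * \<bar>x\<bar> + \<bar>v\<bar> * \<bar>x - y\<bar>"
proof -
  have "u * x - v * y = (u - v) * x + v * (x - y)" by (simp add: algebra_simps)
  then show ?thesis by (metis abs_mult abs_triangle_ineq)
qed

section \<open>The cube and its measure\<close>

abbreviation cube_measure :: "nat \<Rightarrow> real \<Rightarrow> real \<Rightarrow> (nat \<Rightarrow> real) measure" where
  "cube_measure d a b \<equiv> restrict_space (lebd d) (cube d a b)"

lemma space_lebd: "space (lebd d) = PiE {1..d} (\<lambda>_. UNIV)"
  unfolding lebd_def by (simp add: space_PiM)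

lemma cube_in_sets: "cube d a b \<in> sets (lebd d)"
  unfolding lebd_def cube_def by (rule sets_PiM_I_finite) auto

lemma cube_subset_space: "cube d a b \<subseteq> space (lebd d)"
  unfolding space_lebd cube_def by (auto simp: PiE_def)

lemma space_cube_measure: "space (cube_measure d a b) = cube d a b"
  using cube_subset_space by (simp add: space_restrict_space Int_absorb1 Int_commute)

lemma sets_cube_measureI:
  "A \<in> sets (lebd d) \<Longrightarrow> A \<subseteq> cube d a b \<Longrightarrow> A \<in> sets (cube_measure d a b)"
  using cube_in_sets cube_subset_space by (subst sets_restrict_space_iff) auto

lemma measure_cube_measure:
  "A \<in> sets (lebd d) \<Longrightarrow> A \<subseteq> cube d a b \<Longrightarrow> measure (cube_measure d a b) A = measure (lebd d) A"
  using cube_in_sets cube_subset_space by (intro measure_restrict_space) (auto simp: Int_absorb2)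

lemma finite_measure_cube: "finite_measure (cube_measure d a b)"
proof (rule finite_measureI)
  interpret product_sigma_finite "\<lambda>_. lborel" by standard
  have "emeasure (cube_measure d a b) (space (cube_measure d a b)) = (\<Prod>i\<in>{1..d}. emeasure lborel {a..b})"
    using cube_in_sets cube_subset_space
    by (simp add: space_cube_measure emeasure_restrict_space lebd_def cube_def emeasure_PiM)
  then show "emeasure (cube_measure d a b) (space (cube_measure d a b)) \<noteq> \<infinity>"
    by (simp add: power_eq_top_ennreal_iff emeasure_lborel_Icc_eq)
qed

lemma set_integral_cube:
  "set_lebesgue_integral (lebd d) (cube d a b) g = integral\<^sup>L (cube_measure d a b) (g :: _ \<Rightarrow> real)"
  unfolding set_lebesgue_integral_def
  by (subst integral_restrict_space) (use cube_in_sets cube_subset_space in \<open>auto simp: Int_absorb2\<close>)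

lemma integrable_cube_measure_bounded:
  assumes "g \<in> borel_measurable (cube_measure d a b)" "\<And>y. y \<in> cube d a b \<Longrightarrow> \<bar>g y\<bar> \<le> B"
  shows "integrable (cube_measure d a b) (g :: _ \<Rightarrow> real)"
proof -
  interpret finite_measure "cube_measure d a b" by (rule finite_measure_cube)
  show ?thesis
    by (rule integrable_const_bound[where B=B]) (use assms in \<open>auto simp: space_cube_measure\<close>)
qed

lemma integral_cube_measure_indicator_sum:
  fixes A :: "'i \<Rightarrow> (nat \<Rightarrow> real) set"
  assumes "finite I" "\<And>i. i \<in> I \<Longrightarrow> A i \<in> sets (lebd d)" "\<And>i. i \<in> I \<Longrightarrow> A i \<subseteq> cube d a b"
  shows "integrable (cube_measure d a b) (\<lambda>y. c + B * (\<Sum>i\<in>I. indicator (A i) y))"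
    and "(\<integral>y. c + B * (\<Sum>i\<in>I. indicator (A i) y) \<partial>cube_measure d a b)
      = c * measure (lebd d) (cube d a b) + B * (\<Sum>i\<in>I. measure (lebd d) (A i))"
proof -
  let ?M = "cube_measure d a b"
  interpret finite_measure ?M by (rule finite_measure_cube)
  have int: "integrable ?M (indicator (A i) :: _ \<Rightarrow> real)" if "i \<in> I" for i
    using assms(2,3) that by (intro integrable_real_indicator sets_cube_measureI) (auto simp: less_top[symmetric])
  then show "integrable ?M (\<lambda>y. c + B * (\<Sum>i\<in>I. indicator (A i) y))"
    by (intro Bochner_Integration.integrable_add integrable_mult_right Bochner_Integration.integrable_sum) auto
  have "(\<integral>y. c + B * (\<Sum>i\<in>I. indicator (A i) y) \<partial>?M) = c * measure ?M (space ?M) + B * (\<Sum>i\<in>I. measure ?M (A i))"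
    using int assms(3) by (subst Bochner_Integration.integral_add)
      (auto intro!: Bochner_Integration.integrable_sum simp: Bochner_Integration.integral_sum space_cube_measure Int_absorb2)
  then show "(\<integral>y. c + B * (\<Sum>i\<in>I. indicator (A i) y) \<partial>?M)
      = c * measure (lebd d) (cube d a b) + B * (\<Sum>i\<in>I. measure (lebd d) (A i))"
    using assms(2,3) by (simp add: space_cube_measure measure_cube_measure cube_in_sets)
qed

lemma measurable_component_lebd: "j \<in> {1..d} \<Longrightarrow> (\<lambda>y. y j) \<in> borel_measurable (lebd d)"
  unfolding lebd_def using measurable_component_singleton[of j "{1..d}" "\<lambda>_. lborel"]
  by (simp add: measurable_lborel1)

lemma borel_measurable_affine_lebd:
  "(\<lambda>y. \<beta> + (\<Sum>j=1..d. w j * y j)) \<in> borel_measurable (lebd d)"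
  by (intro borel_measurable_add borel_measurable_const borel_measurable_sum borel_measurable_times
      measurable_component_lebd) auto

lemma borel_measurable_continuous_on_cube:
  assumes "continuous_on (cube d a b) f"
  shows "(f :: (nat \<Rightarrow> real) \<Rightarrow> real) \<in> borel_measurable (cube_measure d a b)"
proof -
  have "(\<lambda>y. y) \<in> borel_measurable (lebd d)"
  proof (rule measurable_coordinatewise_then_product)
    fix i :: nat
    show "(\<lambda>y. y i) \<in> borel_measurable (lebd d)"
    proof (cases "i \<in> {1..d}")
      case False
      then have "\<And>y. y \<in> space (lebd d) \<Longrightarrow> y i = undefined"
        by (auto simp: space_lebd PiE_def extensional_def)
      then show ?thesis
        by (subst measurable_cong[where g="\<lambda>_. undefined"]) auto
    qed (rule measurable_component_lebd)
  qed
  then have "(\<lambda>y. y) \<in> measurable (cube_measure d a b) (restrict_space borel (cube d a b))"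
    by (rule measurable_restrict_space3) auto
  with borel_measurable_continuous_on_restrict[OF assms] show ?thesis
    using measurable_comp by (metis comp_id fun.map_ident)
qed

lemma compact_cube: "compact (cube d a b)"
proof -
  have eq: "cube d a b = PiE UNIV (\<lambda>i. if i \<in> {1..d} then {a..b} else {undefined})"
    unfolding cube_def by (auto simp: PiE_def extensional_def Pi_def split: if_splits)
  have "compactin (product_topology (\<lambda>i. euclidean) UNIV)
          (PiE UNIV (\<lambda>i. if i \<in> {1..d} then {a..b} else {undefined::real}))"
    by (subst compactin_PiE) (auto simp: compactin_euclidean_iff)
  then show ?thesis
    unfolding eq by (simp add: euclidean_product_topology compactin_euclidean_iff)
qed

lemma continuous_on_cube_bounded:
  assumes "continuous_on (cube d a b) (f :: _ \<Rightarrow> real)"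
  obtains B where "\<And>y. y \<in> cube d a b \<Longrightarrow> \<bar>f y\<bar> \<le> B"
  using compact_imp_bounded[OF compact_continuous_image[OF assms compact_cube]]
  by (auto simp: bounded_iff)

lemma continuous_bounded_on_interval:
  assumes "continuous_on UNIV (\<sigma> :: real \<Rightarrow> real)"
  obtains B where "\<And>u. \<bar>u\<bar> \<le> Z \<Longrightarrow> \<bar>\<sigma> u\<bar> \<le> B"
proof -
  have "compact (\<sigma> ` {-Z..Z})"
    by (rule compact_continuous_image[OF continuous_on_subset[OF assms]]) auto
  then obtain B where "\<forall>z\<in>\<sigma> ` {-Z..Z}. \<bar>z\<bar> \<le> B"
    using compact_imp_bounded bounded_iff real_norm_def by metis
  then show ?thesis by (intro that[of B]) (auto simp: abs_le_iff)
qed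

lemma cube_component_abs_le:
  assumes "y \<in> cube d a b" "j \<in> {1..d}"
  shows "\<bar>y j\<bar> \<le> \<bar>a\<bar> + \<bar>b\<bar>"
proof -
  have "y j \<in> {a..b}" using assms unfolding cube_def by auto
  then show ?thesis by auto
qed

lemma cube_nonempty: "a \<le> b \<Longrightarrow> cube d a b \<noteq> {}"
  unfolding cube_def by (auto simp: PiE_eq_empty_iff)

section \<open>Shallow networks\<close>

lemma weight_index_in_range:
  assumes i: "i \<in> {1..H}" and j: "j \<in> {1..d}"
  shows "(i - 1) * d + j \<in> {1..pdim d H}"
proof -
  have "(i - 1) * d + j \<le> (H - 1) * d + d" using i j by (intro add_mono mult_right_mono) auto
  also have "\<dots> = H * d" using i by (cases H) auto
  finally show ?thesis using j by (auto simp: pdim_def mult.commute)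
qed

lemma bias_index_in_range: "i \<in> {1..H} \<Longrightarrow> H * d + i \<in> {1..pdim d H}"
  by (auto simp: pdim_def)

lemma outer_index_in_range: "i \<in> {1..H} \<Longrightarrow> H * (d + 1) + i \<in> {1..pdim d H}"
  by (auto simp: pdim_def)

lemma pdim_in_range: "pdim d H \<in> {1..pdim d H}"
  by (auto simp: pdim_def)

definition preact :: "nat \<Rightarrow> nat \<Rightarrow> (nat \<Rightarrow> real) \<Rightarrow> nat \<Rightarrow> (nat \<Rightarrow> real) \<Rightarrow> real" where
  "preact d H \<theta> i y = bs d H \<theta> i + (\<Sum>j=1..d. wt d \<theta> i j * y j)"

definition realization ::
  "nat \<Rightarrow> nat \<Rightarrow> (real \<Rightarrow> real) \<Rightarrow> (nat \<Rightarrow> real) \<Rightarrow> (nat \<Rightarrow> real) \<Rightarrow> real" where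
  "realization d H \<sigma> \<theta> y = cc d H \<theta> + (\<Sum>i=1..H. vs d H \<theta> i * \<sigma> (preact d H \<theta> i y))"

definition preact_partial :: "nat \<Rightarrow> nat \<Rightarrow> nat \<Rightarrow> nat \<Rightarrow> (nat \<Rightarrow> real) \<Rightarrow> real" where
  "preact_partial d H k i y =
     (if H * d + i = k then 1 else 0) + (\<Sum>j=1..d. (if (i - 1) * d + j = k then 1 else 0) * y j)"

definition realization_partial ::
  "nat \<Rightarrow> nat \<Rightarrow> (real \<Rightarrow> real) \<Rightarrow> (real \<Rightarrow> real) \<Rightarrow> (nat \<Rightarrow> real) \<Rightarrow> nat \<Rightarrow> (nat \<Rightarrow> real) \<Rightarrow> real" where
  "realization_partial d H \<sigma> \<sigma>' \<theta> k y = (if pdim d H = k then 1 else 0) +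
     (\<Sum>i=1..H. (if H * (d + 1) + i = k then \<sigma> (preact d H \<theta> i y) else 0)
        + vs d H \<theta> i * \<sigma>' (preact d H \<theta> i y) * preact_partial d H k i y)"

lemma has_real_derivative_update:
  "((\<lambda>s. (\<theta>(k := s)) m) has_real_derivative (if m = k then 1 else 0)) (at s)"
  by (cases "m = k") auto

lemma has_real_derivative_preact:
  "((\<lambda>s. preact d H (\<theta>(k := s)) i y) has_real_derivative preact_partial d H k i y) (at s)"
  unfolding preact_def preact_partial_def bs_def wt_def
  by (rule derivative_eq_intros has_real_derivative_update DERIV_sum refl | simp)+

lemma has_real_derivative_realization:
  assumes "\<And>x. (\<sigma> has_real_derivative \<sigma>' x) (at x)"
  shows "((\<lambda>s. realization d H \<sigma> (\<theta>(k := s)) y) has_real_derivative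
           realization_partial d H \<sigma> \<sigma>' (\<theta>(k := s)) k y) (at s)"
proof -
  have outer: "((\<lambda>s. vs d H (\<theta>(k := s)) i * \<sigma> (preact d H (\<theta>(k := s)) i y)) has_real_derivative
      (if H * (d + 1) + i = k then \<sigma> (preact d H (\<theta>(k := s)) i y) else 0)
      + vs d H (\<theta>(k := s)) i * \<sigma>' (preact d H (\<theta>(k := s)) i y) * preact_partial d H k i y) (at s)" for i
    unfolding vs_def
    by (rule DERIV_cong[OF DERIV_mult[OF has_real_derivative_update
          DERIV_chain2[OF assms has_real_derivative_preact]]]) auto
  show ?thesis
    unfolding realization_def realization_partial_def cc_def
    by (intro DERIV_add DERIV_sum outer has_real_derivative_update)
qed

definition coord_bounded :: "nat \<Rightarrow> real \<Rightarrow> (nat \<Rightarrow> real) \<Rightarrow> bool" where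
  "coord_bounded n K \<theta> \<longleftrightarrow> (\<forall>m\<in>{1..n}. \<bar>\<theta> m\<bar> \<le> K)"

lemma coord_bounded_nonneg: "coord_bounded (pdim d H) K \<theta> \<Longrightarrow> K \<ge> 0"
  using pdim_in_range[of d H] unfolding coord_bounded_def by force

lemma coord_bounded_l1: "coord_bounded n (\<Sum>m=1..n. \<bar>\<theta> m\<bar>) \<theta>"
  unfolding coord_bounded_def by (auto intro: member_le_sum)

definition input_bound :: "nat \<Rightarrow> real \<Rightarrow> real \<Rightarrow> real" where
  "input_bound d a b = 1 + real d * (\<bar>a\<bar> + \<bar>b\<bar>)"

lemma input_bound_ge_1: "input_bound d a b \<ge> 1"
  unfolding input_bound_def by simp

lemma abs_affine_on_cube_le:
  assumes "y \<in> cube d a b" "\<bar>\<beta>\<bar> \<le> K" "\<And>j. j \<in> {1..d} \<Longrightarrow> \<bar>w j\<bar> \<le> K"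
  shows "\<bar>\<beta> + (\<Sum>j=1..d. w j * y j)\<bar> \<le> K * input_bound d a b"
proof -
  have "\<bar>w j * y j\<bar> \<le> K * (\<bar>a\<bar> + \<bar>b\<bar>)" if "j \<in> {1..d}" for j
    unfolding abs_mult
    by (rule mult_mono) (use assms(3)[OF that] cube_component_abs_le[OF assms(1) that] in auto)
  then have "\<bar>\<Sum>j=1..d. w j * y j\<bar> \<le> real (card {1..d}) * (K * (\<bar>a\<bar> + \<bar>b\<bar>))"
    by (rule abs_sum_le_card_mult)
  then show ?thesis using assms(2) by (simp add: input_bound_def algebra_simps)
qed

lemma abs_preact_partial_le: "y \<in> cube d a b \<Longrightarrow> \<bar>preact_partial d H k i y\<bar> \<le> input_bound d a b"
  unfolding preact_partial_def using abs_affine_on_cube_le[of y d a b _ 1] by simp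

lemma abs_preact_le:
  assumes "coord_bounded (pdim d H) K \<theta>" "i \<in> {1..H}" "y \<in> cube d a b"
  shows "\<bar>preact d H \<theta> i y\<bar> \<le> K * input_bound d a b"
  unfolding preact_def
  using assms bias_index_in_range weight_index_in_range
  by (intro abs_affine_on_cube_le) (auto simp: coord_bounded_def bs_def wt_def)

lemma abs_realization_le:
  assumes \<theta>: "coord_bounded (pdim d H) K \<theta>" and y: "y \<in> cube d a b"
    and \<sigma>_bound: "\<And>u. \<bar>u\<bar> \<le> K * input_bound d a b \<Longrightarrow> \<bar>\<sigma> u\<bar> \<le> S"
  shows "\<bar>realization d H \<sigma> \<theta> y\<bar> \<le> K + real H * (K * S)"
proof -
  have "\<bar>vs d H \<theta> i * \<sigma> (preact d H \<theta> i y)\<bar> \<le> K * S" if i: "i \<in> {1..H}" for i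
    unfolding abs_mult
    by (rule mult_mono) (use \<theta> i outer_index_in_range \<sigma>_bound[OF abs_preact_le[OF \<theta> i y]] coord_bounded_nonneg[OF \<theta>]
        in \<open>auto simp: coord_bounded_def vs_def\<close>)
  then have "\<bar>\<Sum>i=1..H. vs d H \<theta> i * \<sigma> (preact d H \<theta> i y)\<bar> \<le> real (card {1..H}) * (K * S)"
    by (rule abs_sum_le_card_mult)
  moreover have "\<bar>cc d H \<theta>\<bar> \<le> K" using \<theta> pdim_in_range by (auto simp: coord_bounded_def cc_def)
  ultimately show ?thesis unfolding realization_def by simp
qed

lemma abs_realization_partial_le:
  assumes \<theta>: "coord_bounded (pdim d H) K \<theta>" and y: "y \<in> cube d a b"
    and \<sigma>_bound: "\<And>u. \<bar>u\<bar> \<le> K * input_bound d a b \<Longrightarrow> \<bar>\<sigma> u\<bar> \<le> S"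
    and \<sigma>'_bound: "\<And>u. \<bar>u\<bar> \<le> K * input_bound d a b \<Longrightarrow> \<bar>\<sigma>' u\<bar> \<le> S'"
  shows "\<bar>realization_partial d H \<sigma> \<sigma>' \<theta> k y\<bar> \<le> 1 + real H * (S + K * (S' * input_bound d a b))"
proof -
  have "\<bar>(if H * (d + 1) + i = k then \<sigma> (preact d H \<theta> i y) else 0)
        + vs d H \<theta> i * \<sigma>' (preact d H \<theta> i y) * preact_partial d H k i y\<bar>
      \<le> S + K * (S' * input_bound d a b)" if i: "i \<in> {1..H}" for i
  proof -
    have z: "\<bar>preact d H \<theta> i y\<bar> \<le> K * input_bound d a b" by (rule abs_preact_le[OF \<theta> i y])
    have "\<bar>vs d H \<theta> i * \<sigma>' (preact d H \<theta> i y) * preact_partial d H k i y\<bar>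
        \<le> K * (S' * input_bound d a b)"
      unfolding abs_mult mult.assoc
      using \<theta> i outer_index_in_range \<sigma>'_bound[OF z] abs_preact_partial_le[OF y] coord_bounded_nonneg[OF \<theta>]
      by (intro mult_mono) (auto simp: coord_bounded_def vs_def)
    moreover have "\<bar>if H * (d + 1) + i = k then \<sigma> (preact d H \<theta> i y) else 0\<bar> \<le> S"
      using \<sigma>_bound[OF z] by auto
    ultimately show ?thesis by linarith
  qed
  then have "\<bar>\<Sum>i=1..H. (if H * (d + 1) + i = k then \<sigma> (preact d H \<theta> i y) else 0)
        + vs d H \<theta> i * \<sigma>' (preact d H \<theta> i y) * preact_partial d H k i y\<bar>
      \<le> real (card {1..H}) * (S + K * (S' * input_bound d a b))"
    by (rule abs_sum_le_card_mult)
  then show ?thesis unfolding realization_partial_def by (auto intro: abs_triangle_ineq[THEN order_trans])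
qed

lemma borel_measurable_preact: "(\<lambda>y. preact d H \<theta> i y) \<in> borel_measurable (lebd d)"
  unfolding preact_def by (rule borel_measurable_affine_lebd)

lemma borel_measurable_realization:
  "\<sigma> \<in> borel_measurable borel \<Longrightarrow>
    (\<lambda>y. realization d H \<sigma> \<theta> y) \<in> borel_measurable (cube_measure d a b)"
  unfolding realization_def
  by (intro borel_measurable_add borel_measurable_const borel_measurable_sum borel_measurable_times
      measurable_compose[OF measurable_restrict_space1[OF borel_measurable_preact]])

lemma borel_measurable_realization_partial:
  assumes "\<sigma> \<in> borel_measurable borel" "\<sigma>' \<in> borel_measurable borel"
  shows "(\<lambda>y. realization_partial d H \<sigma> \<sigma>' \<theta> k y) \<in> borel_measurable (cube_measure d a b)"
proof -
  have "(\<lambda>y. preact_partial d H k i y) \<in> borel_measurable (lebd d)" for i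
    unfolding preact_partial_def by (rule borel_measurable_affine_lebd)
  then show ?thesis
    unfolding realization_partial_def using assms
    by (intro borel_measurable_add borel_measurable_const borel_measurable_sum borel_measurable_times
        measurable_compose[OF measurable_restrict_space1[OF borel_measurable_preact]]
        measurable_restrict_space1 borel_measurable_if) auto
qed

definition l1_dist :: "nat \<Rightarrow> (nat \<Rightarrow> real) \<Rightarrow> (nat \<Rightarrow> real) \<Rightarrow> real" where
  "l1_dist n \<phi> \<psi> = (\<Sum>m=1..n. \<bar>\<phi> m - \<psi> m\<bar>)"

lemma l1_dist_component_le: "m \<in> {1..n} \<Longrightarrow> \<bar>\<phi> m - \<psi> m\<bar> \<le> l1_dist n \<phi> \<psi>"
  unfolding l1_dist_def by (rule member_le_sum) auto

lemma l1_dist_nonneg: "l1_dist n \<phi> \<psi> \<ge> 0"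
  unfolding l1_dist_def by (simp add: sum_nonneg)

lemma l1_dist_eq_0_imp_eq:
  assumes "\<phi> \<in> param_space n" "\<psi> \<in> param_space n" "l1_dist n \<phi> \<psi> = 0"
  shows "\<phi> = \<psi>"
proof
  fix m
  show "\<phi> m = \<psi> m"
  proof (cases "m \<in> {1..n}")
    case True
    then show ?thesis using l1_dist_component_le[OF True, of \<phi> \<psi>] assms(3) by simp
  qed (use assms(1,2) in \<open>auto simp: param_space_def\<close>)
qed

lemma continuous_on_l1_dist:
  assumes "\<forall>m\<in>{1..n}. continuous_on S (\<lambda>t. X t m)" "\<forall>m\<in>{1..n}. continuous_on S (\<lambda>t. Y t m)"
  shows "continuous_on S (\<lambda>t. l1_dist n (X t) (Y t))"
  unfolding l1_dist_def using assms by (intro continuous_intros) auto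

lemma continuous_on_l1_dist_near:
  fixes X :: "real \<Rightarrow> nat \<Rightarrow> real"
  assumes cont: "\<forall>m\<in>{1..n}. continuous_on {0..} (\<lambda>t. X t m)" and t\<^sub>0: "t\<^sub>0 \<ge> 0" and \<delta>: "\<delta> > 0"
  obtains \<eta> where "\<eta> > 0" "\<And>s. s \<ge> 0 \<Longrightarrow> \<bar>s - t\<^sub>0\<bar> < \<eta> \<Longrightarrow> l1_dist n (X t\<^sub>0) (X s) \<le> \<delta>"
proof -
  have "continuous_on {0..} (\<lambda>t. l1_dist n (X t\<^sub>0) (X t))"
    using cont by (intro continuous_on_l1_dist) auto
  then obtain \<eta> where "\<eta> > 0"
    "\<forall>s\<in>{0..}. dist s t\<^sub>0 < \<eta> \<longrightarrow> dist (l1_dist n (X t\<^sub>0) (X s)) (l1_dist n (X t\<^sub>0) (X t\<^sub>0)) < \<delta>"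
    using t\<^sub>0 \<delta> unfolding continuous_on_iff by (metis atLeast_iff)
  moreover have "l1_dist n (X t\<^sub>0) (X t\<^sub>0) = 0" by (simp add: l1_dist_def)
  ultimately show ?thesis by (intro that[of \<eta>]) (auto simp: dist_real_def)
qed

lemma coord_bounded_l1_ball:
  assumes "l1_dist n \<theta>\<^sub>0 \<phi> \<le> \<delta>"
  shows "coord_bounded n ((\<Sum>m=1..n. \<bar>\<theta>\<^sub>0 m\<bar>) + \<delta>) \<phi>"
  unfolding coord_bounded_def
proof
  fix m assume m: "m \<in> {1..n}"
  have "\<bar>\<phi> m\<bar> \<le> \<bar>\<theta>\<^sub>0 m\<bar> + \<bar>\<theta>\<^sub>0 m - \<phi> m\<bar>" by simp
  also have "\<dots> \<le> (\<Sum>m=1..n. \<bar>\<theta>\<^sub>0 m\<bar>) + l1_dist n \<theta>\<^sub>0 \<phi>"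
    using m by (intro add_mono member_le_sum l1_dist_component_le) auto
  finally show "\<bar>\<phi> m\<bar> \<le> (\<Sum>m=1..n. \<bar>\<theta>\<^sub>0 m\<bar>) + \<delta>" using assms by simp
qed

lemma abs_preact_diff_le:
  assumes "i \<in> {1..H}" "y \<in> cube d a b"
  shows "\<bar>preact d H \<phi> i y - preact d H \<psi> i y\<bar> \<le> l1_dist (pdim d H) \<phi> \<psi> * input_bound d a b"
proof -
  have "preact d H \<phi> i y - preact d H \<psi> i y
      = (bs d H \<phi> i - bs d H \<psi> i) + (\<Sum>j=1..d. (wt d \<phi> i j - wt d \<psi> i j) * y j)"
    unfolding preact_def by (simp add: algebra_simps sum_subtractf)
  also have "\<bar>\<dots>\<bar> \<le> l1_dist (pdim d H) \<phi> \<psi> * input_bound d a b"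
    using assms bias_index_in_range weight_index_in_range
    by (intro abs_affine_on_cube_le) (auto simp: bs_def wt_def intro: l1_dist_component_le)
  finally show ?thesis .
qed

section \<open>Gradients of the smoothed risk\<close>

definition risk_grad_integrand ::
  "nat \<Rightarrow> nat \<Rightarrow> ((nat \<Rightarrow> real) \<Rightarrow> real) \<Rightarrow> ((nat \<Rightarrow> real) \<Rightarrow> real) \<Rightarrow> (real \<Rightarrow> real)
    \<Rightarrow> (real \<Rightarrow> real) \<Rightarrow> (nat \<Rightarrow> real) \<Rightarrow> nat \<Rightarrow> (nat \<Rightarrow> real) \<Rightarrow> real" where
  "risk_grad_integrand d H f p \<sigma> \<sigma>' \<theta> k y =
     2 * (realization d H \<sigma> \<theta> y - f y) * realization_partial d H \<sigma> \<sigma>' \<theta> k y * p y"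

lemma abs_risk_grad_integrand_le:
  assumes \<theta>: "coord_bounded (pdim d H) K \<theta>" and y: "y \<in> cube d a b"
    and "\<bar>f y\<bar> \<le> F" "\<bar>p y\<bar> \<le> P"
    and \<sigma>_bound: "\<And>u. \<bar>u\<bar> \<le> K * input_bound d a b \<Longrightarrow> \<bar>\<sigma> u\<bar> \<le> S"
    and \<sigma>'_bound: "\<And>u. \<bar>u\<bar> \<le> K * input_bound d a b \<Longrightarrow> \<bar>\<sigma>' u\<bar> \<le> S'"
  shows "\<bar>risk_grad_integrand d H f p \<sigma> \<sigma>' \<theta> k y\<bar>
    \<le> 2 * (K + real H * (K * S) + F) * (1 + real H * (S + K * (S' * input_bound d a b))) * P"
proof -
  have N: "\<bar>realization d H \<sigma> \<theta> y - f y\<bar> \<le> K + real H * (K * S) + F"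
    using abs_realization_le[where \<sigma>=\<sigma>, OF \<theta> y \<sigma>_bound] assms(3) by linarith
  have D: "\<bar>realization_partial d H \<sigma> \<sigma>' \<theta> k y\<bar> \<le> 1 + real H * (S + K * (S' * input_bound d a b))"
    by (rule abs_realization_partial_le[OF \<theta> y \<sigma>_bound \<sigma>'_bound])
  show ?thesis
    unfolding risk_grad_integrand_def abs_mult
    using N D assms(4) order_trans[OF abs_ge_zero N] order_trans[OF abs_ge_zero D]
    by (intro mult_mono) auto
qed

lemma borel_measurable_risk_grad_integrand:
  assumes "f \<in> borel_measurable (cube_measure d a b)" "p \<in> borel_measurable (cube_measure d a b)"
    and "\<sigma> \<in> borel_measurable borel" "\<sigma>' \<in> borel_measurable borel"
  shows "risk_grad_integrand d H f p \<sigma> \<sigma>' \<theta> k \<in> borel_measurable (cube_measure d a b)"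
  unfolding risk_grad_integrand_def[abs_def] using assms
  by (intro borel_measurable_times borel_measurable_const borel_measurable_diff
      borel_measurable_realization borel_measurable_realization_partial)

lemma smooth_risk_eq_integral:
  "smooth_risk d H a b f p \<sigma> \<theta> = (\<integral>y. (f y - realization d H \<sigma> \<theta> y)\<^sup>2 * p y \<partial>cube_measure d a b)"
  unfolding smooth_risk_def set_integral_cube realization_def preact_def by (simp add: algebra_simps)

lemma coord_bounded_update:
  assumes "k \<in> {1..n}" "\<bar>s - \<theta> k\<bar> \<le> 1"
  shows "coord_bounded n (1 + (\<Sum>m=1..n. \<bar>\<theta> m\<bar>)) (\<theta>(k := s))"
  unfolding coord_bounded_def
proof
  fix m assume "m \<in> {1..n}"
  then have "\<bar>\<theta> k\<bar> \<le> (\<Sum>m=1..n. \<bar>\<theta> m\<bar>)" "\<bar>\<theta> m\<bar> \<le> (\<Sum>m=1..n. \<bar>\<theta> m\<bar>)"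
    using assms(1) by (auto intro: member_le_sum)
  then show "\<bar>(\<theta>(k := s)) m\<bar> \<le> 1 + (\<Sum>m=1..n. \<bar>\<theta> m\<bar>)" using assms(2) by auto
qed

lemma integrable_squared_loss:
  assumes f_cont: "continuous_on (cube d a b) f"
    and p_meas: "p \<in> borel_measurable (cube_measure d a b)"
    and p_bdd: "\<And>y. y \<in> cube d a b \<Longrightarrow> \<bar>p y\<bar> \<le> P"
    and \<sigma>_cont: "continuous_on UNIV \<sigma>"
  shows "integrable (cube_measure d a b) (\<lambda>y. (f y - realization d H \<sigma> \<theta> y)\<^sup>2 * p y)"
proof -
  define K where "K = (\<Sum>m=1..pdim d H. \<bar>\<theta> m\<bar>)"
  have \<theta>: "coord_bounded (pdim d H) K \<theta>" unfolding K_def by (rule coord_bounded_l1)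
  obtain F where F: "\<And>y. y \<in> cube d a b \<Longrightarrow> \<bar>f y\<bar> \<le> F"
    using continuous_on_cube_bounded[OF f_cont] by blast
  obtain S where S: "\<And>u. \<bar>u\<bar> \<le> K * input_bound d a b \<Longrightarrow> \<bar>\<sigma> u\<bar> \<le> S"
    using continuous_bounded_on_interval[OF \<sigma>_cont] by blast
  show ?thesis
  proof (rule integrable_cube_measure_bounded)
    show "(\<lambda>y. (f y - realization d H \<sigma> \<theta> y)\<^sup>2 * p y) \<in> borel_measurable (cube_measure d a b)"
      by (intro borel_measurable_times borel_measurable_power borel_measurable_diff p_meas
          borel_measurable_continuous_on_cube[OF f_cont] borel_measurable_realization
          borel_measurable_continuous_onI[OF \<sigma>_cont])
  next
    fix y assume y: "y \<in> cube d a b"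
    have "\<bar>f y - realization d H \<sigma> \<theta> y\<bar> \<le> F + (K + real H * (K * S))"
      using F[OF y] abs_realization_le[where \<sigma>=\<sigma>, OF \<theta> y S] by linarith
    then have "(f y - realization d H \<sigma> \<theta> y)\<^sup>2 \<le> (F + (K + real H * (K * S)))\<^sup>2"
      by (metis abs_ge_zero power2_abs power_mono)
    then show "\<bar>(f y - realization d H \<sigma> \<theta> y)\<^sup>2 * p y\<bar> \<le> (F + (K + real H * (K * S)))\<^sup>2 * P"
      unfolding abs_mult using p_bdd[OF y] by (intro mult_mono) auto
  qed
qed

lemma grad_smooth_risk:
  assumes f_cont: "continuous_on (cube d a b) f"
    and p_meas: "p \<in> borel_measurable (cube_measure d a b)"
    and p_bdd: "\<And>y. y \<in> cube d a b \<Longrightarrow> \<bar>p y\<bar> \<le> P"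
    and \<sigma>_diff: "\<And>x. \<sigma> differentiable (at x)"
    and \<sigma>'_cont: "continuous_on UNIV (deriv \<sigma>)"
    and k: "k \<in> {1..pdim d H}"
  shows "grad (smooth_risk d H a b f p \<sigma>) \<theta> k
       = (\<integral>y. risk_grad_integrand d H f p \<sigma> (deriv \<sigma>) \<theta> k y \<partial>cube_measure d a b)"
proof -
  define g where "g s y = (f y - realization d H \<sigma> (\<theta>(k := s)) y)\<^sup>2 * p y" for s y
  define g' where "g' s = risk_grad_integrand d H f p \<sigma> (deriv \<sigma>) (\<theta>(k := s)) k" for s
  have \<sigma>_der: "\<And>x. (\<sigma> has_real_derivative deriv \<sigma> x) (at x)"
    using \<sigma>_diff DERIV_deriv_iff_real_differentiable by blast
  have \<sigma>_cont: "continuous_on UNIV \<sigma>"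
    using \<sigma>_diff by (simp add: differentiable_imp_continuous_within continuous_at_imp_continuous_on)
  have g_der: "((\<lambda>s. g s y) has_real_derivative g' s y) (at s)" for s y
    unfolding g_def g'_def risk_grad_integrand_def
    by (rule DERIV_cong, (rule derivative_eq_intros has_real_derivative_realization \<sigma>_der refl)+)
      (simp add: algebra_simps)
  define K where "K = 1 + (\<Sum>m=1..pdim d H. \<bar>\<theta> m\<bar>)"
  obtain F where F: "\<And>y. y \<in> cube d a b \<Longrightarrow> \<bar>f y\<bar> \<le> F"
    using continuous_on_cube_bounded[OF f_cont] by blast
  obtain S where S: "\<And>u. \<bar>u\<bar> \<le> K * input_bound d a b \<Longrightarrow> \<bar>\<sigma> u\<bar> \<le> S"
    using continuous_bounded_on_interval[OF \<sigma>_cont] by blast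
  obtain S' where S': "\<And>u. \<bar>u\<bar> \<le> K * input_bound d a b \<Longrightarrow> \<bar>deriv \<sigma> u\<bar> \<le> S'"
    using continuous_bounded_on_interval[OF \<sigma>'_cont] by blast
  have "((\<lambda>s. \<integral>y. g s y \<partial>cube_measure d a b) has_real_derivative
          (\<integral>y. g' (\<theta> k) y \<partial>cube_measure d a b)) (at (\<theta> k))"
  proof (rule DERIV_integral_dominated[OF finite_measure_cube _ _ _ g_der])
    show "g s \<in> borel_measurable (cube_measure d a b)" for s
      using integrable_squared_loss[OF f_cont p_meas p_bdd \<sigma>_cont] unfolding g_def by blast
    show "integrable (cube_measure d a b) (g s)" for s
      using integrable_squared_loss[OF f_cont p_meas p_bdd \<sigma>_cont] unfolding g_def by blast
    show "g' (\<theta> k) \<in> borel_measurable (cube_measure d a b)"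
      unfolding g'_def
      by (intro borel_measurable_risk_grad_integrand borel_measurable_continuous_on_cube[OF f_cont] p_meas
          borel_measurable_continuous_onI[OF \<sigma>_cont] borel_measurable_continuous_onI[OF \<sigma>'_cont])
    show "\<bar>g' s y\<bar> \<le> 2 * (K + real H * (K * S) + F) * (1 + real H * (S + K * (S' * input_bound d a b))) * P"
      if "y \<in> space (cube_measure d a b)" "\<bar>s - \<theta> k\<bar> \<le> 1" for s y
      unfolding g'_def K_def using that k F p_bdd S S'
      by (intro abs_risk_grad_integrand_le coord_bounded_update) (auto simp: space_cube_measure K_def)
  qed
  then show ?thesis
    unfolding grad_def smooth_risk_eq_integral g_def g'_def by (simp add: DERIV_imp_deriv)
qed

definition relu :: "real \<Rightarrow> real" where
  "relu x = max x 0"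

definition heaviside :: "real \<Rightarrow> real" where
  "heaviside x = (if x > 0 then 1 else 0)"

lemma borel_measurable_relu: "relu \<in> borel_measurable borel"
  unfolding relu_def by measurable

lemma borel_measurable_heaviside: "heaviside \<in> borel_measurable borel"
  unfolding heaviside_def by measurable

lemma abs_relu_diff_le: "\<bar>relu u - relu v\<bar> \<le> \<bar>u - v\<bar>"
  unfolding relu_def by auto

lemma abs_relu_le: "\<bar>relu u\<bar> \<le> \<bar>u\<bar>"
  unfolding relu_def by auto

lemma abs_heaviside_le: "\<bar>heaviside u\<bar> \<le> 1"
  unfolding heaviside_def by auto

definition relu_gradient ::
  "nat \<Rightarrow> nat \<Rightarrow> real \<Rightarrow> real \<Rightarrow> ((nat \<Rightarrow> real) \<Rightarrow> real) \<Rightarrow> ((nat \<Rightarrow> real) \<Rightarrow> real)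
   \<Rightarrow> (nat \<Rightarrow> real) \<Rightarrow> nat \<Rightarrow> real" where
  "relu_gradient d H a b f p \<theta> k =
     (\<integral>y. risk_grad_integrand d H f p relu heaviside \<theta> k y \<partial>cube_measure d a b)"

lemma smoothing_tendsto:
  assumes "\<forall>x. (\<lambda>r. \<bar>R r x - max x 0\<bar> + \<bar>deriv (R r) x - indicator {0<..} x\<bar>) \<longlonglongrightarrow> 0"
  shows "(\<lambda>r. R r x) \<longlonglongrightarrow> relu x" "(\<lambda>r. deriv (R r) x) \<longlonglongrightarrow> heaviside x"
proof -
  have "(\<lambda>r. R r x - max x 0) \<longlonglongrightarrow> 0" "(\<lambda>r. deriv (R r) x - indicator {0<..} x) \<longlonglongrightarrow> 0"
    by (rule Lim_null_comparison[OF _ assms[rule_format, of x]]; simp)+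
  then show "(\<lambda>r. R r x) \<longlonglongrightarrow> relu x" "(\<lambda>r. deriv (R r) x) \<longlonglongrightarrow> heaviside x"
    unfolding relu_def heaviside_def by (auto dest: LIM_zero_cancel simp: indicator_def)
qed

lemma smoothing_uniformly_bounded:
  fixes R :: "nat \<Rightarrow> real \<Rightarrow> real"
  assumes R_C1: "\<forall>r\<ge>1. (\<forall>x. R r differentiable (at x)) \<and> continuous_on UNIV (deriv (R r))"
    and R_lim: "\<forall>x. (\<lambda>r. \<bar>R r x - max x 0\<bar> + \<bar>deriv (R r) x - indicator {0<..} x\<bar>) \<longlonglongrightarrow> 0"
    and R_bdd: "\<forall>x. \<exists>C. \<forall>r\<ge>1. \<forall>y\<in>{-\<bar>x\<bar>..\<bar>x\<bar>}. \<bar>deriv (R r) y\<bar> \<le> C"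
  obtains S C where "\<And>r u. r \<ge> 1 \<Longrightarrow> \<bar>u\<bar> \<le> Z \<Longrightarrow> \<bar>R r u\<bar> \<le> S"
    and "\<And>r u. r \<ge> 1 \<Longrightarrow> \<bar>u\<bar> \<le> Z \<Longrightarrow> \<bar>deriv (R r) u\<bar> \<le> C"
proof -
  obtain C where C: "\<And>r u. r \<ge> 1 \<Longrightarrow> u \<in> {-\<bar>Z\<bar>..\<bar>Z\<bar>} \<Longrightarrow> \<bar>deriv (R r) u\<bar> \<le> C"
    using R_bdd by blast
  have "C \<ge> 0" using C[of 1 0] by simp
  obtain B where B: "\<And>r. \<bar>R r 0\<bar> \<le> B"
    using convergent_imp_bounded[OF smoothing_tendsto(1)[OF R_lim, of 0]] by (auto simp: bounded_iff)
  have "\<bar>R r u\<bar> \<le> B + C * \<bar>Z\<bar>" if "r \<ge> 1" "\<bar>u\<bar> \<le> Z" for r u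
  proof -
    have "\<bar>R r u - R r 0\<bar> \<le> C * \<bar>u - 0\<bar>"
      using R_C1 that C DERIV_deriv_iff_real_differentiable
      by (intro DERIV_abs_diff_le[of "-\<bar>Z\<bar>" "\<bar>Z\<bar>"]) auto
    also have "\<dots> \<le> C * \<bar>Z\<bar>" using that \<open>C \<ge> 0\<close> by (intro mult_left_mono) auto
    finally show ?thesis using B[of r] by linarith
  qed
  moreover have "\<bar>deriv (R r) u\<bar> \<le> C" if "r \<ge> 1" "\<bar>u\<bar> \<le> Z" for r u
    using that by (intro C[of r u]) (auto simp: abs_le_iff)
  ultimately show ?thesis using that by blast
qed

lemma risk_grad_integrand_tendsto:
  assumes "\<forall>x. (\<lambda>r. \<bar>R r x - max x 0\<bar> + \<bar>deriv (R r) x - indicator {0<..} x\<bar>) \<longlonglongrightarrow> 0"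
  shows "(\<lambda>r. risk_grad_integrand d H f p (R r) (deriv (R r)) \<theta> k y)
    \<longlonglongrightarrow> risk_grad_integrand d H f p relu heaviside \<theta> k y"
  unfolding risk_grad_integrand_def realization_def realization_partial_def
  using smoothing_tendsto[OF assms] by (intro tendsto_intros) auto

lemma grad_smooth_risk_tendsto:
  fixes R :: "nat \<Rightarrow> real \<Rightarrow> real"
  assumes f_cont: "continuous_on (cube d a b) f"
    and p_meas: "p \<in> borel_measurable (cube_measure d a b)"
    and p_bdd: "\<And>y. y \<in> cube d a b \<Longrightarrow> \<bar>p y\<bar> \<le> P"
    and R_C1: "\<forall>r\<ge>1. (\<forall>x. R r differentiable (at x)) \<and> continuous_on UNIV (deriv (R r))"
    and R_lim: "\<forall>x. (\<lambda>r. \<bar>R r x - max x 0\<bar> + \<bar>deriv (R r) x - indicator {0<..} x\<bar>) \<longlonglongrightarrow> 0"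
    and R_bdd: "\<forall>x. \<exists>C. \<forall>r\<ge>1. \<forall>y\<in>{-\<bar>x\<bar>..\<bar>x\<bar>}. \<bar>deriv (R r) y\<bar> \<le> C"
    and k: "k \<in> {1..pdim d H}"
  shows "(\<lambda>r. grad (smooth_risk d H a b f p (R r)) \<theta> k) \<longlonglongrightarrow> relu_gradient d H a b f p \<theta> k"
proof -
  define K where "K = (\<Sum>m=1..pdim d H. \<bar>\<theta> m\<bar>)"
  have \<theta>: "coord_bounded (pdim d H) K \<theta>" unfolding K_def by (rule coord_bounded_l1)
  obtain F where F: "\<And>y. y \<in> cube d a b \<Longrightarrow> \<bar>f y\<bar> \<le> F"
    using continuous_on_cube_bounded[OF f_cont] by blast
  obtain S C where S: "\<And>r u. r \<ge> 1 \<Longrightarrow> \<bar>u\<bar> \<le> K * input_bound d a b \<Longrightarrow> \<bar>R r u\<bar> \<le> S"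
    and C: "\<And>r u. r \<ge> 1 \<Longrightarrow> \<bar>u\<bar> \<le> K * input_bound d a b \<Longrightarrow> \<bar>deriv (R r) u\<bar> \<le> C"
    using smoothing_uniformly_bounded[OF R_C1 R_lim R_bdd] by metis
  have R_cont: "continuous_on UNIV (R r)" "continuous_on UNIV (deriv (R r))" if "r \<ge> 1" for r
    using R_C1 that
    by (auto simp: differentiable_imp_continuous_within continuous_at_imp_continuous_on)
  define h where "h r = risk_grad_integrand d H f p (R (r + 1)) (deriv (R (r + 1))) \<theta> k" for r
  have lim: "(\<lambda>r. \<integral>y. h r y \<partial>cube_measure d a b) \<longlonglongrightarrow> relu_gradient d H a b f p \<theta> k"
    unfolding relu_gradient_def
  proof (rule integral_dominated_convergence
      [where w="\<lambda>_. 2 * (K + real H * (K * S) + F) * (1 + real H * (S + K * (C * input_bound d a b))) * P"])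
    show "risk_grad_integrand d H f p relu heaviside \<theta> k \<in> borel_measurable (cube_measure d a b)"
      by (intro borel_measurable_risk_grad_integrand borel_measurable_continuous_on_cube[OF f_cont] p_meas
          borel_measurable_relu borel_measurable_heaviside)
    show "h r \<in> borel_measurable (cube_measure d a b)" for r
      unfolding h_def
      by (intro borel_measurable_risk_grad_integrand borel_measurable_continuous_on_cube[OF f_cont] p_meas
          borel_measurable_continuous_onI R_cont) auto
    show "AE y in cube_measure d a b. (\<lambda>r. h r y) \<longlonglongrightarrow> risk_grad_integrand d H f p relu heaviside \<theta> k y"
      unfolding h_def
      using LIMSEQ_ignore_initial_segment[where k=1, OF risk_grad_integrand_tendsto[OF R_lim]] by simp
    show "AE y in cube_measure d a b. norm (h r y)
        \<le> 2 * (K + real H * (K * S) + F) * (1 + real H * (S + K * (C * input_bound d a b))) * P" for r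
      unfolding h_def real_norm_def
    proof (rule AE_I2)
      fix y assume "y \<in> space (cube_measure d a b)"
      then have y: "y \<in> cube d a b" by (simp add: space_cube_measure)
      show "\<bar>risk_grad_integrand d H f p (R (r + 1)) (deriv (R (r + 1))) \<theta> k y\<bar>
        \<le> 2 * (K + real H * (K * S) + F) * (1 + real H * (S + K * (C * input_bound d a b))) * P"
        by (rule abs_risk_grad_integrand_le[where f=f and p=p, OF \<theta> y F[OF y] p_bdd[OF y]]) (auto intro: S C)

    qed
  qed (simp add: finite_measure.integrable_const[OF finite_measure_cube])
  have "grad (smooth_risk d H a b f p (R (r + 1))) \<theta> k = (\<integral>y. h r y \<partial>cube_measure d a b)" for r
  proof -
    have "\<And>x. R (r + 1) differentiable (at x)" "continuous_on UNIV (deriv (R (r + 1)))"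
      using R_C1 by auto
    from grad_smooth_risk[OF f_cont p_meas p_bdd this k] show ?thesis unfolding h_def .
  qed
  then show ?thesis
    using LIMSEQ_offset[where f="\<lambda>r. grad (smooth_risk d H a b f p (R r)) \<theta> k" and k=1] lim by simp
qed

lemma limit_gradient_eq_relu_gradient:
  fixes R :: "nat \<Rightarrow> real \<Rightarrow> real"
  assumes f_cont: "continuous_on (cube d a b) f"
    and p_meas: "p \<in> borel_measurable (cube_measure d a b)"
    and p_bdd: "\<And>y. y \<in> cube d a b \<Longrightarrow> \<bar>p y\<bar> \<le> P"
    and R_C1: "\<forall>r\<ge>1. (\<forall>x. R r differentiable (at x)) \<and> continuous_on UNIV (deriv (R r))"
    and R_lim: "\<forall>x. (\<lambda>r. \<bar>R r x - max x 0\<bar> + \<bar>deriv (R r) x - indicator {0<..} x\<bar>) \<longlonglongrightarrow> 0"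
    and R_bdd: "\<forall>x. \<exists>C. \<forall>r\<ge>1. \<forall>y\<in>{-\<bar>x\<bar>..\<bar>x\<bar>}. \<bar>deriv (R r) y\<bar> \<le> C"
    and G_def: "\<forall>\<phi>\<in>param_space (pdim d H).
        (\<exists>g. \<forall>i\<in>{1..pdim d H}. (\<lambda>r. grad (smooth_risk d H a b f p (R r)) \<phi> i) \<longlonglongrightarrow> g i) \<longrightarrow>
        (\<forall>i\<in>{1..pdim d H}. (\<lambda>r. grad (smooth_risk d H a b f p (R r)) \<phi> i) \<longlonglongrightarrow> G \<phi> i)"
    and \<phi>: "\<phi> \<in> param_space (pdim d H)" and k: "k \<in> {1..pdim d H}"
  shows "G \<phi> k = relu_gradient d H a b f p \<phi> k"
proof -
  have "(\<lambda>r. grad (smooth_risk d H a b f p (R r)) \<phi> i) \<longlonglongrightarrow> relu_gradient d H a b f p \<phi> i"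
    if "i \<in> {1..pdim d H}" for i
    by (rule grad_smooth_risk_tendsto[OF f_cont p_meas p_bdd R_C1 R_lim R_bdd that])
  then show ?thesis using G_def \<phi> k LIMSEQ_unique by blast
qed

section \<open>Activation switching sets\<close>

lemma emeasure_affine_slab_le:
  fixes w \<beta> \<epsilon> :: real
  assumes "w \<noteq> 0" "\<epsilon> \<ge> 0"
  shows "emeasure lborel {t. 0 < \<beta> + w * t \<and> \<beta> + w * t \<le> \<epsilon>} \<le> ennreal (\<epsilon> / \<bar>w\<bar>)"
proof -
  define l where "l = (if w > 0 then - \<beta> / w else (\<epsilon> - \<beta>) / w)"
  have "{t. 0 < \<beta> + w * t \<and> \<beta> + w * t \<le> \<epsilon>} \<subseteq> {l .. l + \<epsilon> / \<bar>w\<bar>}"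
    using assms(1) by (cases "w > 0") (auto simp: l_def field_simps)
  then have "emeasure lborel {t. 0 < \<beta> + w * t \<and> \<beta> + w * t \<le> \<epsilon>} \<le> emeasure lborel {l .. l + \<epsilon> / \<bar>w\<bar>}"
    by (rule emeasure_mono) simp
  also have "\<dots> = ennreal (\<epsilon> / \<bar>w\<bar>)"
    using assms by (simp add: emeasure_lborel_Icc_eq)
  finally show ?thesis .
qed

definition slab :: "nat \<Rightarrow> real \<Rightarrow> real \<Rightarrow> (nat \<Rightarrow> real) \<Rightarrow> real \<Rightarrow> real \<Rightarrow> (nat \<Rightarrow> real) set" where
  "slab d a b w \<beta> \<epsilon> =
     {y \<in> cube d a b. 0 < \<beta> + (\<Sum>j=1..d. w j * y j) \<and> \<beta> + (\<Sum>j=1..d. w j * y j) \<le> \<epsilon>}"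

lemma slab_in_sets: "slab d a b w \<beta> \<epsilon> \<in> sets (lebd d)"
proof -
  have "slab d a b w \<beta> \<epsilon> = cube d a b \<inter> ((\<lambda>y. \<beta> + (\<Sum>j=1..d. w j * y j)) -` {0<..\<epsilon>} \<inter> space (lebd d))"
    unfolding slab_def using cube_subset_space by auto
  also have "\<dots> \<in> sets (lebd d)"
    by (intro sets.Int cube_in_sets measurable_sets[OF borel_measurable_affine_lebd]) simp
  finally show ?thesis .
qed

lemma nn_integral_slab_fiber_le:
  assumes j: "j \<in> {1..d}" and w: "c > 0" "\<bar>w j\<bar> \<ge> c" and \<epsilon>: "\<epsilon> \<ge> 0"
    and x: "x \<in> extensional ({1..d} - {j})"
  shows "(\<integral>\<^sup>+ t. indicator (slab d a b w \<beta> \<epsilon>) (x(j := t)) \<partial>lborel)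
    \<le> ennreal (\<epsilon> / c) * indicator (PiE ({1..d} - {j}) (\<lambda>_. {a..b})) x"
proof (cases "x \<in> PiE ({1..d} - {j}) (\<lambda>_. {a..b})")
  case False
  have "x(j := t) \<notin> cube d a b" for t
    using False x unfolding cube_def by (auto simp: PiE_def Pi_def split: if_splits)
  then show ?thesis unfolding slab_def by simp
next
  case True
  define \<beta>' where "\<beta>' = \<beta> + (\<Sum>j'\<in>{1..d} - {j}. w j' * x j')"
  have "(\<Sum>j'=1..d. w j' * (x(j := t)) j') = w j * t + (\<Sum>j'\<in>{1..d} - {j}. w j' * x j')" for t
  proof -
    have "(\<Sum>j'=1..d. w j' * (x(j := t)) j') = w j * (x(j := t)) j + (\<Sum>j'\<in>{1..d} - {j}. w j' * (x(j := t)) j')"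
      by (rule sum.remove) (use j in auto)
    also have "(\<Sum>j'\<in>{1..d} - {j}. w j' * (x(j := t)) j') = (\<Sum>j'\<in>{1..d} - {j}. w j' * x j')"
      by (intro sum.cong) auto
    finally show ?thesis by simp
  qed
  then have "indicator (slab d a b w \<beta> \<epsilon>) (x(j := t))
      \<le> (indicator {t. 0 < \<beta>' + w j * t \<and> \<beta>' + w j * t \<le> \<epsilon>} t :: ennreal)" for t
    unfolding slab_def \<beta>'_def by (auto simp: algebra_simps split: split_indicator)
  then have "(\<integral>\<^sup>+ t. indicator (slab d a b w \<beta> \<epsilon>) (x(j := t)) \<partial>lborel)
      \<le> (\<integral>\<^sup>+ t. indicator {t. 0 < \<beta>' + w j * t \<and> \<beta>' + w j * t \<le> \<epsilon>} t \<partial>lborel)"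
    by (intro nn_integral_mono)
  also have "\<dots> = emeasure lborel {t. 0 < \<beta>' + w j * t \<and> \<beta>' + w j * t \<le> \<epsilon>}"
    by (intro nn_integral_indicator) simp
  also have "\<dots> \<le> ennreal (\<epsilon> / \<bar>w j\<bar>)"
    using w \<epsilon> by (intro emeasure_affine_slab_le) auto
  also have "\<dots> \<le> ennreal (\<epsilon> / c)"
    using w \<epsilon> by (intro ennreal_leI divide_left_mono) auto
  finally show ?thesis using True by simp
qed

lemma emeasure_slab_le:
  assumes j: "j \<in> {1..d}" and w: "c > 0" "\<bar>w j\<bar> \<ge> c" and \<epsilon>: "\<epsilon> \<ge> 0" and ab: "a \<le> b"
  shows "emeasure (lebd d) (slab d a b w \<beta> \<epsilon>) \<le> ennreal (\<epsilon> / c * (b - a) ^ (d - 1))"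
proof -
  interpret product_sigma_finite "\<lambda>_::nat. lborel::real measure" by standard
  define I where "I = {1..d} - {j}"
  have I: "insert j I = {1..d}" "j \<notin> I" "finite I" "card I = d - 1"
    using j unfolding I_def by auto
  let ?S = "slab d a b w \<beta> \<epsilon>"
  have "emeasure (lebd d) ?S = (\<integral>\<^sup>+y. indicator ?S y \<partial>PiM (insert j I) (\<lambda>_. lborel))"
    using slab_in_sets unfolding I lebd_def by simp
  also have "\<dots> = (\<integral>\<^sup>+x. (\<integral>\<^sup>+t. indicator ?S (x(j := t)) \<partial>lborel) \<partial>PiM I (\<lambda>_. lborel))"
    using slab_in_sets[of d a b w \<beta> \<epsilon>] unfolding lebd_def I(1)[symmetric]
    by (intro product_nn_integral_insert I borel_measurable_indicator)
  also have "\<dots> \<le> (\<integral>\<^sup>+x. ennreal (\<epsilon> / c) * indicator (PiE I (\<lambda>_. {a..b})) x \<partial>PiM I (\<lambda>_. lborel))"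
    unfolding I_def using j w \<epsilon>
    by (intro nn_integral_mono nn_integral_slab_fiber_le) (auto simp: space_PiM PiE_def)
  also have "\<dots> = ennreal (\<epsilon> / c) * (\<Prod>i\<in>I. emeasure lborel {a..b})"
    by (subst nn_integral_cmult_indicator) (auto intro: sets_PiM_I_finite simp: I emeasure_PiM)
  also have "\<dots> = ennreal (\<epsilon> / c * (b - a) ^ (d - 1))"
    using ab w \<epsilon> I by (simp add: ennreal_power ennreal_mult'[symmetric])
  finally show ?thesis .
qed

definition switch_set :: "nat \<Rightarrow> nat \<Rightarrow> real \<Rightarrow> real \<Rightarrow> (nat \<Rightarrow> real) \<Rightarrow> (nat \<Rightarrow> real) \<Rightarrow> nat
    \<Rightarrow> (nat \<Rightarrow> real) set" where
  "switch_set d H a b \<phi> \<psi> i = {y \<in> cube d a b. (preact d H \<phi> i y > 0) \<noteq> (preact d H \<psi> i y > 0)}"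

lemma switch_set_in_sets: "switch_set d H a b \<phi> \<psi> i \<in> sets (lebd d)"
proof -
  let ?pos = "\<lambda>\<theta>. {y \<in> space (lebd d). preact d H \<theta> i y > 0}"
  have "?pos \<theta> \<in> sets (lebd d)" for \<theta>
    using borel_measurable_preact by measurable
  moreover have "switch_set d H a b \<phi> \<psi> i
      = cube d a b \<inter> ((space (lebd d) - ?pos \<phi>) \<inter> ?pos \<psi> \<union> ?pos \<phi> \<inter> (space (lebd d) - ?pos \<psi>))"
    unfolding switch_set_def using cube_subset_space by auto
  ultimately show ?thesis using cube_in_sets by auto
qed

lemma switch_set_subset_slabs:
  assumes "i \<in> {1..H}" "l1_dist (pdim d H) \<phi> \<psi> * input_bound d a b \<le> \<epsilon>"
  shows "switch_set d H a b \<phi> \<psi> i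
    \<subseteq> slab d a b (wt d \<phi> i) (bs d H \<phi> i) \<epsilon> \<union> slab d a b (wt d \<psi> i) (bs d H \<psi> i) \<epsilon>"
proof
  fix y assume y: "y \<in> switch_set d H a b \<phi> \<psi> i"
  then have "y \<in> cube d a b" unfolding switch_set_def by auto
  with y abs_preact_diff_le[OF assms(1) this, of \<phi> \<psi>]
  show "y \<in> slab d a b (wt d \<phi> i) (bs d H \<phi> i) \<epsilon> \<union> slab d a b (wt d \<psi> i) (bs d H \<psi> i) \<epsilon>"
    using assms(2) unfolding switch_set_def slab_def preact_def by auto
qed

lemma preact_degen: "i \<in> degen d H \<theta> \<Longrightarrow> preact d H \<theta> i y = 0"
  unfolding degen_def preact_def
  by (auto simp: add_nonneg_eq_0_iff sum_nonneg sum_nonneg_eq_0_iff)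

lemma switch_set_degen:
  "i \<in> degen d H \<phi> \<Longrightarrow> i \<in> degen d H \<psi> \<Longrightarrow> switch_set d H a b \<phi> \<psi> i = {}"
  unfolding switch_set_def by (simp add: preact_degen)

lemma emeasure_switch_set_weight:
  assumes i: "i \<in> {1..H}" and j: "j \<in> {1..d}" and ab: "a \<le> b" and w: "wt d \<theta>\<^sub>0 i j \<noteq> 0"
    and near: "l1_dist (pdim d H) \<theta>\<^sub>0 \<phi> \<le> \<bar>wt d \<theta>\<^sub>0 i j\<bar> / 2" "l1_dist (pdim d H) \<theta>\<^sub>0 \<psi> \<le> \<bar>wt d \<theta>\<^sub>0 i j\<bar> / 2"
  shows "emeasure (lebd d) (switch_set d H a b \<phi> \<psi> i)
    \<le> ennreal (4 * input_bound d a b / \<bar>wt d \<theta>\<^sub>0 i j\<bar> * (b - a) ^ (d - 1) * l1_dist (pdim d H) \<phi> \<psi>)"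
proof -
  define c where "c = \<bar>wt d \<theta>\<^sub>0 i j\<bar> / 2"
  define \<epsilon> where "\<epsilon> = l1_dist (pdim d H) \<phi> \<psi> * input_bound d a b"
  have c: "c > 0" unfolding c_def using w by simp
  have \<epsilon>: "\<epsilon> \<ge> 0"
    unfolding \<epsilon>_def using input_bound_ge_1[of d a b] l1_dist_nonneg[of "pdim d H" \<phi> \<psi>] by simp
  have "c \<le> \<bar>wt d \<rho> i j\<bar>" if "l1_dist (pdim d H) \<theta>\<^sub>0 \<rho> \<le> c" for \<rho>
    using l1_dist_component_le[OF weight_index_in_range[OF i j], of \<theta>\<^sub>0 \<rho>] that
    unfolding c_def wt_def by linarith
  then have w\<phi>: "c \<le> \<bar>wt d \<phi> i j\<bar>" and w\<psi>: "c \<le> \<bar>wt d \<psi> i j\<bar>" using near unfolding c_def by auto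
  have "emeasure (lebd d) (switch_set d H a b \<phi> \<psi> i)
      \<le> emeasure (lebd d) (slab d a b (wt d \<phi> i) (bs d H \<phi> i) \<epsilon> \<union> slab d a b (wt d \<psi> i) (bs d H \<psi> i) \<epsilon>)"
    using switch_set_subset_slabs[OF i] unfolding \<epsilon>_def
    by (intro emeasure_mono sets.Un slab_in_sets) auto
  also have "\<dots> \<le> emeasure (lebd d) (slab d a b (wt d \<phi> i) (bs d H \<phi> i) \<epsilon>)
      + emeasure (lebd d) (slab d a b (wt d \<psi> i) (bs d H \<psi> i) \<epsilon>)"
    by (intro emeasure_subadditive slab_in_sets)
  also have "\<dots> \<le> ennreal (\<epsilon> / c * (b - a) ^ (d - 1)) + ennreal (\<epsilon> / c * (b - a) ^ (d - 1))"
    by (intro add_mono emeasure_slab_le[OF j c] w\<phi> w\<psi> \<epsilon> ab)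
  also have "\<dots> = ennreal (4 * input_bound d a b / \<bar>wt d \<theta>\<^sub>0 i j\<bar> * (b - a) ^ (d - 1) * l1_dist (pdim d H) \<phi> \<psi>)"
    using \<epsilon> c ab unfolding c_def \<epsilon>_def
    by (simp add: ennreal_plus[symmetric] del: ennreal_plus) (simp add: field_simps)
  finally show ?thesis .
qed

lemma switch_set_bias_empty:
  assumes i: "i \<in> {1..H}" and w: "\<forall>j\<in>{1..d}. wt d \<theta>\<^sub>0 i j = 0" and b: "bs d H \<theta>\<^sub>0 i \<noteq> 0"
    and near: "l1_dist (pdim d H) \<theta>\<^sub>0 \<phi> \<le> \<bar>bs d H \<theta>\<^sub>0 i\<bar> / (2 * input_bound d a b)"
      "l1_dist (pdim d H) \<theta>\<^sub>0 \<psi> \<le> \<bar>bs d H \<theta>\<^sub>0 i\<bar> / (2 * input_bound d a b)"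
  shows "switch_set d H a b \<phi> \<psi> i = {}"
proof -
  have "(preact d H \<rho> i y > 0) \<longleftrightarrow> bs d H \<theta>\<^sub>0 i > 0"
    if y: "y \<in> cube d a b" and \<rho>: "l1_dist (pdim d H) \<theta>\<^sub>0 \<rho> \<le> \<bar>bs d H \<theta>\<^sub>0 i\<bar> / (2 * input_bound d a b)" for y \<rho>
  proof -
    have "\<bar>preact d H \<theta>\<^sub>0 i y - preact d H \<rho> i y\<bar> \<le> l1_dist (pdim d H) \<theta>\<^sub>0 \<rho> * input_bound d a b"
      by (rule abs_preact_diff_le[OF i y])
    also have "\<dots> \<le> \<bar>bs d H \<theta>\<^sub>0 i\<bar> / 2"
      using \<rho> input_bound_ge_1[of d a b] by (simp add: field_simps)
    finally show ?thesis
      using w b unfolding preact_def by (auto simp: abs_if split: if_split_asm)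
  qed
  then show ?thesis unfolding switch_set_def using near by auto
qed

lemma emeasure_switch_set_nondegen:
  assumes i: "i \<in> {1..H}" and nondegen: "i \<notin> degen d H \<theta>\<^sub>0" and ab: "a \<le> b"
  shows "\<exists>\<delta>>0. \<exists>C\<ge>0. \<forall>\<phi> \<psi>. l1_dist (pdim d H) \<theta>\<^sub>0 \<phi> \<le> \<delta> \<longrightarrow> l1_dist (pdim d H) \<theta>\<^sub>0 \<psi> \<le> \<delta> \<longrightarrow>
     emeasure (lebd d) (switch_set d H a b \<phi> \<psi> i) \<le> ennreal (C * l1_dist (pdim d H) \<phi> \<psi>)"
proof (cases "\<exists>j\<in>{1..d}. wt d \<theta>\<^sub>0 i j \<noteq> 0")
  case True
  then obtain j where j: "j \<in> {1..d}" "wt d \<theta>\<^sub>0 i j \<noteq> 0" by blast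
  define C where "C = 4 * input_bound d a b / \<bar>wt d \<theta>\<^sub>0 i j\<bar> * (b - a) ^ (d - 1)"
  have "C \<ge> 0" unfolding C_def using input_bound_ge_1[of d a b] ab by simp
  then show ?thesis
    using emeasure_switch_set_weight[OF i j(1) ab j(2)] j(2) unfolding C_def[symmetric]
    by (intro exI[of _ "\<bar>wt d \<theta>\<^sub>0 i j\<bar> / 2"] exI[of _ C]) auto
next
  case False
  then have "bs d H \<theta>\<^sub>0 i \<noteq> 0" using nondegen i unfolding degen_def by auto
  then show ?thesis
    using switch_set_bias_empty[OF i] False input_bound_ge_1[of d a b]
    by (intro exI[of _ "\<bar>bs d H \<theta>\<^sub>0 i\<bar> / (2 * input_bound d a b)"] exI[of _ 0]) auto
qed

lemma emeasure_switch_set_locally_lipschitz: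
  assumes ab: "a \<le> b"
  shows "\<exists>\<delta>>0. \<exists>C\<ge>0. \<forall>\<phi> \<psi>. l1_dist (pdim d H) \<theta>\<^sub>0 \<phi> \<le> \<delta> \<longrightarrow> l1_dist (pdim d H) \<theta>\<^sub>0 \<psi> \<le> \<delta> \<longrightarrow>
     degen d H \<theta>\<^sub>0 \<subseteq> degen d H \<phi> \<inter> degen d H \<psi> \<longrightarrow>
     (\<forall>i\<in>{1..H}. emeasure (lebd d) (switch_set d H a b \<phi> \<psi> i) \<le> ennreal (C * l1_dist (pdim d H) \<phi> \<psi>))"
proof -
  define N where "N = {1..H} - degen d H \<theta>\<^sub>0"
  have "\<forall>i\<in>N. \<exists>\<delta>>0. \<exists>C\<ge>0. \<forall>\<phi> \<psi>. l1_dist (pdim d H) \<theta>\<^sub>0 \<phi> \<le> \<delta> \<longrightarrow> l1_dist (pdim d H) \<theta>\<^sub>0 \<psi> \<le> \<delta> \<longrightarrow>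
     emeasure (lebd d) (switch_set d H a b \<phi> \<psi> i) \<le> ennreal (C * l1_dist (pdim d H) \<phi> \<psi>)"
    using emeasure_switch_set_nondegen[OF _ _ ab] unfolding N_def by blast
  then obtain \<delta>f Cf where \<delta>f: "\<And>i. i \<in> N \<Longrightarrow> \<delta>f i > 0" and Cf: "\<And>i. i \<in> N \<Longrightarrow> Cf i \<ge> 0"
    and bound: "\<And>i \<phi> \<psi>. i \<in> N \<Longrightarrow> l1_dist (pdim d H) \<theta>\<^sub>0 \<phi> \<le> \<delta>f i \<Longrightarrow> l1_dist (pdim d H) \<theta>\<^sub>0 \<psi> \<le> \<delta>f i \<Longrightarrow>
      emeasure (lebd d) (switch_set d H a b \<phi> \<psi> i) \<le> ennreal (Cf i * l1_dist (pdim d H) \<phi> \<psi>)"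
    by metis
  define \<delta> where "\<delta> = Min (insert 1 (\<delta>f ` N))"
  define C where "C = (\<Sum>i\<in>N. Cf i)"
  have N: "finite N" unfolding N_def by simp
  have "\<delta> > 0" unfolding \<delta>_def using N \<delta>f by (subst Min_gr_iff) auto
  moreover have "C \<ge> 0" unfolding C_def using Cf by (intro sum_nonneg) auto
  moreover have "emeasure (lebd d) (switch_set d H a b \<phi> \<psi> i) \<le> ennreal (C * l1_dist (pdim d H) \<phi> \<psi>)"
    if near: "l1_dist (pdim d H) \<theta>\<^sub>0 \<phi> \<le> \<delta>" "l1_dist (pdim d H) \<theta>\<^sub>0 \<psi> \<le> \<delta>"
      and degen: "degen d H \<theta>\<^sub>0 \<subseteq> degen d H \<phi> \<inter> degen d H \<psi>" and i: "i \<in> {1..H}" for \<phi> \<psi> i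
  proof (cases "i \<in> N")
    case True
    have "\<delta> \<le> \<delta>f i" unfolding \<delta>_def using N True by (intro Min_le) auto
    then have "emeasure (lebd d) (switch_set d H a b \<phi> \<psi> i) \<le> ennreal (Cf i * l1_dist (pdim d H) \<phi> \<psi>)"
      using bound[OF True] near by auto
    also have "\<dots> \<le> ennreal (C * l1_dist (pdim d H) \<phi> \<psi>)"
      unfolding C_def using N True Cf
      by (intro ennreal_leI mult_right_mono member_le_sum l1_dist_nonneg) auto
    finally show ?thesis .
  next
    case False
    then show ?thesis using degen i switch_set_degen unfolding N_def by fastforce
  qed
  ultimately show ?thesis by blast
qed

section \<open>Local Lipschitz continuity of the limiting gradient\<close>

lemma abs_heaviside_preact_diff:
  "y \<in> cube d a b \<Longrightarrow>
    \<bar>heaviside (preact d H \<phi> i y) - heaviside (preact d H \<psi> i y)\<bar> = indicator (switch_set d H a b \<phi> \<psi> i) y"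
  unfolding heaviside_def switch_set_def by (auto split: split_indicator)

lemma abs_realization_relu_diff_le:
  assumes \<phi>: "coord_bounded (pdim d H) K \<phi>" and \<psi>: "coord_bounded (pdim d H) K \<psi>"
    and y: "y \<in> cube d a b"
  shows "\<bar>realization d H relu \<phi> y - realization d H relu \<psi> y\<bar>
    \<le> (1 + 2 * real H * K * input_bound d a b) * l1_dist (pdim d H) \<phi> \<psi>"
proof -
  let ?e = "l1_dist (pdim d H) \<phi> \<psi>" and ?z = "\<lambda>\<theta> i. preact d H \<theta> i y"
  have K: "K \<ge> 0" by (rule coord_bounded_nonneg[OF \<phi>])
  have "\<bar>vs d H \<phi> i * relu (?z \<phi> i) - vs d H \<psi> i * relu (?z \<psi> i)\<bar> \<le> 2 * K * input_bound d a b * ?e"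
    if i: "i \<in> {1..H}" for i
  proof -
    have "\<bar>vs d H \<phi> i - vs d H \<psi> i\<bar> * \<bar>relu (?z \<phi> i)\<bar> \<le> ?e * (K * input_bound d a b)"
      using l1_dist_component_le[OF outer_index_in_range[OF i]] abs_preact_le[OF \<phi> i y]
        abs_relu_le l1_dist_nonneg order_trans unfolding vs_def by (metis abs_ge_zero mult_mono)
    moreover have "\<bar>vs d H \<psi> i\<bar> * \<bar>relu (?z \<phi> i) - relu (?z \<psi> i)\<bar> \<le> K * (?e * input_bound d a b)"
      using \<psi> outer_index_in_range[OF i] order_trans[OF abs_relu_diff_le abs_preact_diff_le[OF i y]] K
      by (intro mult_mono) (auto simp: coord_bounded_def vs_def)
    ultimately show ?thesis
      using abs_mult_diff_le[of "vs d H \<phi> i" "relu (?z \<phi> i)" "vs d H \<psi> i" "relu (?z \<psi> i)"]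
      by (simp add: algebra_simps)
  qed
  then have "\<bar>\<Sum>i=1..H. vs d H \<phi> i * relu (?z \<phi> i) - vs d H \<psi> i * relu (?z \<psi> i)\<bar>
      \<le> real (card {1..H}) * (2 * K * input_bound d a b * ?e)"
    by (rule abs_sum_le_card_mult)
  moreover have "\<bar>cc d H \<phi> - cc d H \<psi>\<bar> \<le> ?e"
    unfolding cc_def by (rule l1_dist_component_le[OF pdim_in_range])
  ultimately show ?thesis
    unfolding realization_def by (simp add: sum_subtractf algebra_simps)
qed

lemma abs_realization_partial_relu_diff_le:
  assumes \<psi>: "coord_bounded (pdim d H) K \<psi>" and y: "y \<in> cube d a b"
  shows "\<bar>realization_partial d H relu heaviside \<phi> k y - realization_partial d H relu heaviside \<psi> k y\<bar>
    \<le> 2 * real H * input_bound d a b * l1_dist (pdim d H) \<phi> \<psi>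
      + K * input_bound d a b * (\<Sum>i=1..H. indicator (switch_set d H a b \<phi> \<psi> i) y)"
proof -
  let ?e = "l1_dist (pdim d H) \<phi> \<psi>" and ?E = "input_bound d a b" and ?z = "\<lambda>\<theta> i. preact d H \<theta> i y"
  define T where "T \<theta> i = (if H * (d + 1) + i = k then relu (?z \<theta> i) else 0)
        + vs d H \<theta> i * heaviside (?z \<theta> i) * preact_partial d H k i y" for \<theta> i
  have K: "K \<ge> 0" by (rule coord_bounded_nonneg[OF \<psi>])
  have E: "?E \<ge> 1" by (rule input_bound_ge_1)
  have "\<bar>T \<phi> i - T \<psi> i\<bar> \<le> 2 * ?E * ?e + K * ?E * indicator (switch_set d H a b \<phi> \<psi> i) y"
    if i: "i \<in> {1..H}" for i
  proof -
    have relu_part: "\<bar>(if H * (d + 1) + i = k then relu (?z \<phi> i) else 0)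
        - (if H * (d + 1) + i = k then relu (?z \<psi> i) else 0)\<bar> \<le> ?E * ?e"
      using abs_relu_diff_le[of "?z \<phi> i" "?z \<psi> i"] abs_preact_diff_le[OF i y, of \<phi> \<psi>]
        l1_dist_nonneg[of "pdim d H" \<phi> \<psi>] E
      by (auto simp: mult.commute)
    have "\<bar>vs d H \<phi> i - vs d H \<psi> i\<bar> * \<bar>heaviside (?z \<phi> i)\<bar> \<le> ?e * 1"
      using l1_dist_component_le[OF outer_index_in_range[OF i]] l1_dist_nonneg abs_heaviside_le
      unfolding vs_def by (intro mult_mono) auto
    moreover have "\<bar>vs d H \<psi> i\<bar> * \<bar>heaviside (?z \<phi> i) - heaviside (?z \<psi> i)\<bar>
        \<le> K * indicator (switch_set d H a b \<phi> \<psi> i) y"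
      unfolding abs_heaviside_preact_diff[OF y]
      using \<psi> outer_index_in_range[OF i] by (intro mult_right_mono) (auto simp: coord_bounded_def vs_def)
    ultimately have "\<bar>vs d H \<phi> i * heaviside (?z \<phi> i) - vs d H \<psi> i * heaviside (?z \<psi> i)\<bar>
        \<le> ?e * 1 + K * indicator (switch_set d H a b \<phi> \<psi> i) y"
      using abs_mult_diff_le[of "vs d H \<phi> i" "heaviside (?z \<phi> i)" "vs d H \<psi> i" "heaviside (?z \<psi> i)"]
      by linarith
    then have "\<bar>(vs d H \<phi> i * heaviside (?z \<phi> i) - vs d H \<psi> i * heaviside (?z \<psi> i)) * preact_partial d H k i y\<bar>
        \<le> (?e + K * indicator (switch_set d H a b \<phi> \<psi> i) y) * ?E"
      unfolding abs_mult using abs_preact_partial_le[OF y] l1_dist_nonneg[of "pdim d H" \<phi> \<psi>] K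
      by (intro mult_mono) auto
    moreover have "T \<phi> i - T \<psi> i = ((if H * (d + 1) + i = k then relu (?z \<phi> i) else 0)
        - (if H * (d + 1) + i = k then relu (?z \<psi> i) else 0))
        + (vs d H \<phi> i * heaviside (?z \<phi> i) - vs d H \<psi> i * heaviside (?z \<psi> i)) * preact_partial d H k i y"
      unfolding T_def by (simp add: algebra_simps)
    ultimately show ?thesis using relu_part by (simp add: algebra_simps)
  qed
  then have "\<bar>\<Sum>i=1..H. T \<phi> i - T \<psi> i\<bar>
      \<le> (\<Sum>i=1..H. 2 * ?E * ?e + K * ?E * indicator (switch_set d H a b \<phi> \<psi> i) y)"
    by (intro order_trans[OF sum_abs] sum_mono)
  then show ?thesis
    unfolding realization_partial_def T_def[symmetric]
    by (simp add: sum_subtractf sum.distrib sum_distrib_left)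
qed

lemma abs_risk_grad_integrand_relu_diff_le:
  assumes K: "K \<ge> 0" and F: "F \<ge> 0" and P: "P \<ge> 0"
  obtains A B where "A \<ge> 0" "B \<ge> 0"
    and "\<And>\<phi> \<psi> k y. coord_bounded (pdim d H) K \<phi> \<Longrightarrow> coord_bounded (pdim d H) K \<psi> \<Longrightarrow> y \<in> cube d a b \<Longrightarrow>
      \<bar>f y\<bar> \<le> F \<Longrightarrow> \<bar>p y\<bar> \<le> P \<Longrightarrow>
      \<bar>risk_grad_integrand d H f p relu heaviside \<phi> k y - risk_grad_integrand d H f p relu heaviside \<psi> k y\<bar>
        \<le> A * l1_dist (pdim d H) \<phi> \<psi> + B * (\<Sum>i=1..H. indicator (switch_set d H a b \<phi> \<psi> i) y)"
proof -
  let ?E = "input_bound d a b"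
  define loss_bound where "loss_bound = K + real H * (K * (K * ?E)) + F"
  define partial_bound where "partial_bound = 1 + real H * (K * ?E + K * (1 * ?E))"
  define realization_lip where "realization_lip = 1 + 2 * real H * K * ?E"
  define partial_lip where "partial_lip = 2 * real H * ?E"
  have E: "?E \<ge> 1" by (rule input_bound_ge_1)
  have loss_bound: "loss_bound \<ge> 0" and partial_bound: "partial_bound \<ge> 0"
    unfolding loss_bound_def partial_bound_def using K F E by simp_all
  show ?thesis
  proof (rule that[of "2 * P * (realization_lip * partial_bound + loss_bound * partial_lip)" "2 * P * (loss_bound * (K * ?E))"])
    show "2 * P * (realization_lip * partial_bound + loss_bound * partial_lip) \<ge> 0" "2 * P * (loss_bound * (K * ?E)) \<ge> 0"
      using P K E loss_bound partial_bound unfolding realization_lip_def partial_lip_def by simp_all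
  next
    fix \<phi> \<psi> k y
    assume \<phi>: "coord_bounded (pdim d H) K \<phi>" and \<psi>: "coord_bounded (pdim d H) K \<psi>"
      and y: "y \<in> cube d a b" and fy: "\<bar>f y\<bar> \<le> F" and py: "\<bar>p y\<bar> \<le> P"
    let ?e = "l1_dist (pdim d H) \<phi> \<psi>"
    let ?I = "\<Sum>i=1..H. indicator (switch_set d H a b \<phi> \<psi> i) y :: real"
    let ?R = "\<lambda>\<theta>. realization d H relu \<theta> y" and ?D = "\<lambda>\<theta>. realization_partial d H relu heaviside \<theta> k y"
    have relu_bound: "\<And>u. \<bar>u\<bar> \<le> K * ?E \<Longrightarrow> \<bar>relu u\<bar> \<le> K * ?E"
      by (rule order_trans[OF abs_relu_le])
    have heaviside_bound: "\<And>u. \<bar>u\<bar> \<le> K * ?E \<Longrightarrow> \<bar>heaviside u\<bar> \<le> 1"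
      using abs_heaviside_le by blast
    have "\<bar>?R \<psi> - f y\<bar> \<le> loss_bound"
      using abs_realization_le[where \<sigma>=relu, OF \<psi> y relu_bound] fy unfolding loss_bound_def by linarith
    moreover have "\<bar>?D \<phi> - ?D \<psi>\<bar> \<le> partial_lip * ?e + K * ?E * ?I"
      unfolding partial_lip_def by (rule abs_realization_partial_relu_diff_le[OF \<psi> y])
    moreover have "\<bar>?R \<phi> - ?R \<psi>\<bar> \<le> realization_lip * ?e"
      unfolding realization_lip_def by (rule abs_realization_relu_diff_le[OF \<phi> \<psi> y])
    moreover have "\<bar>?D \<phi>\<bar> \<le> partial_bound"
      unfolding partial_bound_def
      by (rule abs_realization_partial_le[where \<sigma>=relu and \<sigma>'=heaviside, OF \<phi> y relu_bound heaviside_bound])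
    ultimately have "\<bar>(?R \<phi> - f y) * ?D \<phi> - (?R \<psi> - f y) * ?D \<psi>\<bar> \<le> realization_lip * ?e * partial_bound + loss_bound * (partial_lip * ?e + K * ?E * ?I)"
      using abs_mult_diff_le[of "?R \<phi> - f y" "?D \<phi>" "?R \<psi> - f y" "?D \<psi>"] loss_bound
      by (smt (verit) abs_ge_zero mult_mono)
    then have "\<bar>2 * p y\<bar> * \<bar>(?R \<phi> - f y) * ?D \<phi> - (?R \<psi> - f y) * ?D \<psi>\<bar>
        \<le> 2 * P * (realization_lip * ?e * partial_bound + loss_bound * (partial_lip * ?e + K * ?E * ?I))"
      using py by (intro mult_mono) auto
    then show "\<bar>risk_grad_integrand d H f p relu heaviside \<phi> k y - risk_grad_integrand d H f p relu heaviside \<psi> k y\<bar>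
        \<le> 2 * P * (realization_lip * partial_bound + loss_bound * partial_lip) * ?e + 2 * P * (loss_bound * (K * ?E)) * ?I"
      unfolding risk_grad_integrand_def abs_mult[symmetric] by (simp add: algebra_simps)
  qed
qed

lemma integrable_risk_grad_integrand_relu:
  assumes f_cont: "continuous_on (cube d a b) f"
    and p_meas: "p \<in> borel_measurable (cube_measure d a b)"
    and p_bdd: "\<And>y. y \<in> cube d a b \<Longrightarrow> \<bar>p y\<bar> \<le> P"
  shows "integrable (cube_measure d a b) (risk_grad_integrand d H f p relu heaviside \<theta> k)"
proof -
  define K where "K = (\<Sum>m=1..pdim d H. \<bar>\<theta> m\<bar>)"
  have \<theta>: "coord_bounded (pdim d H) K \<theta>" unfolding K_def by (rule coord_bounded_l1)
  obtain F where F: "\<And>y. y \<in> cube d a b \<Longrightarrow> \<bar>f y\<bar> \<le> F"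
    using continuous_on_cube_bounded[OF f_cont] by blast
  have relu_bound: "\<And>u. \<bar>u\<bar> \<le> K * input_bound d a b \<Longrightarrow> \<bar>relu u\<bar> \<le> K * input_bound d a b"
    by (rule order_trans[OF abs_relu_le])
  show ?thesis
  proof (rule integrable_cube_measure_bounded)
    show "risk_grad_integrand d H f p relu heaviside \<theta> k \<in> borel_measurable (cube_measure d a b)"
      by (intro borel_measurable_risk_grad_integrand borel_measurable_continuous_on_cube[OF f_cont] p_meas
          borel_measurable_relu borel_measurable_heaviside)
    show "\<bar>risk_grad_integrand d H f p relu heaviside \<theta> k y\<bar>
      \<le> 2 * (K + real H * (K * (K * input_bound d a b)) + F)
          * (1 + real H * (K * input_bound d a b + K * (1 * input_bound d a b))) * P"
      if y: "y \<in> cube d a b" for y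
      using abs_risk_grad_integrand_le[where f=f and p=p and \<sigma>=relu and \<sigma>'=heaviside, OF \<theta> y F[OF y] p_bdd[OF y]
          relu_bound abs_heaviside_le] .
  qed
qed

lemma relu_gradient_lipschitz:
  assumes ab: "a \<le> b"
    and f_cont: "continuous_on (cube d a b) f"
    and p_meas: "p \<in> borel_measurable (cube_measure d a b)"
    and p_bdd: "\<And>y. y \<in> cube d a b \<Longrightarrow> \<bar>p y\<bar> \<le> P"
    and K: "K \<ge> 0" and C: "C \<ge> 0"
  obtains L where "\<And>\<phi> \<psi> k. coord_bounded (pdim d H) K \<phi> \<Longrightarrow> coord_bounded (pdim d H) K \<psi> \<Longrightarrow>
    (\<forall>i\<in>{1..H}. emeasure (lebd d) (switch_set d H a b \<phi> \<psi> i) \<le> ennreal (C * l1_dist (pdim d H) \<phi> \<psi>)) \<Longrightarrow>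
    \<bar>relu_gradient d H a b f p \<phi> k - relu_gradient d H a b f p \<psi> k\<bar> \<le> L * l1_dist (pdim d H) \<phi> \<psi>"
proof -
  let ?M = "cube_measure d a b"
  obtain F where F: "\<And>y. y \<in> cube d a b \<Longrightarrow> \<bar>f y\<bar> \<le> F"
    using continuous_on_cube_bounded[OF f_cont] by blast
  obtain y0 where "y0 \<in> cube d a b" using cube_nonempty[OF ab] by blast
  then have "F \<ge> 0" "P \<ge> 0" using F p_bdd by (meson abs_ge_zero order_trans)+
  then obtain A B where A: "A \<ge> 0" and B: "B \<ge> 0"
    and pointwise: "\<And>\<phi> \<psi> k y. coord_bounded (pdim d H) K \<phi> \<Longrightarrow> coord_bounded (pdim d H) K \<psi> \<Longrightarrow>
      y \<in> cube d a b \<Longrightarrow> \<bar>f y\<bar> \<le> F \<Longrightarrow> \<bar>p y\<bar> \<le> P \<Longrightarrow>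
      \<bar>risk_grad_integrand d H f p relu heaviside \<phi> k y - risk_grad_integrand d H f p relu heaviside \<psi> k y\<bar>
        \<le> A * l1_dist (pdim d H) \<phi> \<psi> + B * (\<Sum>i=1..H. indicator (switch_set d H a b \<phi> \<psi> i) y)"
    using abs_risk_grad_integrand_relu_diff_le[OF K] by metis
  show ?thesis
  proof (rule that[of "A * measure (lebd d) (cube d a b) + B * (real H * C)"])
    fix \<phi> \<psi> k
    assume \<phi>: "coord_bounded (pdim d H) K \<phi>" and \<psi>: "coord_bounded (pdim d H) K \<psi>"
      and switch: "\<forall>i\<in>{1..H}. emeasure (lebd d) (switch_set d H a b \<phi> \<psi> i) \<le> ennreal (C * l1_dist (pdim d H) \<phi> \<psi>)"
    let ?e = "l1_dist (pdim d H) \<phi> \<psi>"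
    let ?g = "\<lambda>\<theta>. risk_grad_integrand d H f p relu heaviside \<theta> k"
    have "switch_set d H a b \<phi> \<psi> i \<subseteq> cube d a b" for i
      unfolding switch_set_def by blast
    note switch_sets = integral_cube_measure_indicator_sum[where A="switch_set d H a b \<phi> \<psi>" and I="{1..H}",
        OF finite_atLeastAtMost switch_set_in_sets this]
    have int: "integrable ?M (?g \<theta>)" for \<theta>
      by (rule integrable_risk_grad_integrand_relu[OF f_cont p_meas p_bdd])
    have "\<bar>relu_gradient d H a b f p \<phi> k - relu_gradient d H a b f p \<psi> k\<bar> = \<bar>\<integral>y. ?g \<phi> y - ?g \<psi> y \<partial>?M\<bar>"
      unfolding relu_gradient_def using int by simp
    also have "\<dots> \<le> (\<integral>y. A * ?e + B * (\<Sum>i=1..H. indicator (switch_set d H a b \<phi> \<psi> i) y) \<partial>?M)"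
      using int switch_sets(1) \<phi> \<psi> F p_bdd
      by (intro abs_integral_le_integral pointwise) (auto simp: space_cube_measure)
    also have "\<dots> = A * ?e * measure (lebd d) (cube d a b)
        + B * (\<Sum>i=1..H. measure (lebd d) (switch_set d H a b \<phi> \<psi> i))"
      by (rule switch_sets(2))
    also have "\<dots> \<le> A * ?e * measure (lebd d) (cube d a b) + B * (\<Sum>i=1..H. C * ?e)"
      unfolding measure_def using switch A B C l1_dist_nonneg[of "pdim d H" \<phi> \<psi>]
      by (intro add_left_mono mult_left_mono sum_mono enn2real_leI) auto
    also have "\<dots> = (A * measure (lebd d) (cube d a b) + B * (real H * C)) * ?e"
      by (simp add: algebra_simps)
    finally show "\<bar>relu_gradient d H a b f p \<phi> k - relu_gradient d H a b f p \<psi> k\<bar>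
      \<le> (A * measure (lebd d) (cube d a b) + B * (real H * C)) * ?e" .
  qed
qed

lemma relu_gradient_locally_lipschitz:
  assumes ab: "a \<le> b"
    and f_cont: "continuous_on (cube d a b) f"
    and p_meas: "p \<in> borel_measurable (cube_measure d a b)"
    and p_bdd: "\<And>y. y \<in> cube d a b \<Longrightarrow> \<bar>p y\<bar> \<le> P"
  obtains \<delta> L where "\<delta> > 0"
    and "\<And>\<phi> \<psi> k. l1_dist (pdim d H) \<theta>\<^sub>0 \<phi> \<le> \<delta> \<Longrightarrow> l1_dist (pdim d H) \<theta>\<^sub>0 \<psi> \<le> \<delta> \<Longrightarrow>
      degen d H \<theta>\<^sub>0 \<subseteq> degen d H \<phi> \<inter> degen d H \<psi> \<Longrightarrow>
      \<bar>relu_gradient d H a b f p \<phi> k - relu_gradient d H a b f p \<psi> k\<bar> \<le> L * l1_dist (pdim d H) \<phi> \<psi>"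
proof -
  obtain \<delta> C where \<delta>: "\<delta> > 0" and C: "C \<ge> 0"
    and switch: "\<And>\<phi> \<psi>. l1_dist (pdim d H) \<theta>\<^sub>0 \<phi> \<le> \<delta> \<Longrightarrow> l1_dist (pdim d H) \<theta>\<^sub>0 \<psi> \<le> \<delta> \<Longrightarrow>
      degen d H \<theta>\<^sub>0 \<subseteq> degen d H \<phi> \<inter> degen d H \<psi> \<Longrightarrow>
      \<forall>i\<in>{1..H}. emeasure (lebd d) (switch_set d H a b \<phi> \<psi> i) \<le> ennreal (C * l1_dist (pdim d H) \<phi> \<psi>)"
    using emeasure_switch_set_locally_lipschitz[OF ab, of d H \<theta>\<^sub>0] by blast
  define K where "K = (\<Sum>m=1..pdim d H. \<bar>\<theta>\<^sub>0 m\<bar>) + \<delta>"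
  have "K \<ge> 0" unfolding K_def using \<delta> by (simp add: sum_nonneg)
  then obtain L where L: "\<And>\<phi> \<psi> k. coord_bounded (pdim d H) K \<phi> \<Longrightarrow> coord_bounded (pdim d H) K \<psi> \<Longrightarrow>
      (\<forall>i\<in>{1..H}. emeasure (lebd d) (switch_set d H a b \<phi> \<psi> i) \<le> ennreal (C * l1_dist (pdim d H) \<phi> \<psi>)) \<Longrightarrow>
      \<bar>relu_gradient d H a b f p \<phi> k - relu_gradient d H a b f p \<psi> k\<bar> \<le> L * l1_dist (pdim d H) \<phi> \<psi>"
    using relu_gradient_lipschitz[OF ab f_cont p_meas p_bdd _ C] by blast
  show ?thesis
    using \<delta> L switch coord_bounded_l1_ball unfolding K_def by (intro that) blast+
qed

lemma relu_gradient_lipschitz_along_trajectories: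
  fixes \<Theta>\<^sub>1 \<Theta>\<^sub>2 :: "real \<Rightarrow> nat \<Rightarrow> real"
  assumes ab: "a \<le> b"
    and f_cont: "continuous_on (cube d a b) f"
    and p_meas: "p \<in> borel_measurable (cube_measure d a b)"
    and p_bdd: "\<And>y. y \<in> cube d a b \<Longrightarrow> \<bar>p y\<bar> \<le> P"
    and G: "\<And>\<phi> m. \<phi> \<in> param_space (pdim d H) \<Longrightarrow> m \<in> {1..pdim d H} \<Longrightarrow>
      G \<phi> m = relu_gradient d H a b f p \<phi> m"
    and space: "\<And>t. t \<ge> 0 \<Longrightarrow> \<Theta>\<^sub>1 t \<in> param_space (pdim d H) \<and> \<Theta>\<^sub>2 t \<in> param_space (pdim d H)"
    and cont: "\<forall>m\<in>{1..pdim d H}. continuous_on {0..} (\<lambda>t. \<Theta>\<^sub>1 t m)"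
      "\<forall>m\<in>{1..pdim d H}. continuous_on {0..} (\<lambda>t. \<Theta>\<^sub>2 t m)"
    and degen_mono: "\<And>t s. 0 \<le> t \<Longrightarrow> t \<le> s \<Longrightarrow> degen d H (\<Theta>\<^sub>1 t) \<subseteq> degen d H (\<Theta>\<^sub>1 s)"
      "\<And>t s. 0 \<le> t \<Longrightarrow> t \<le> s \<Longrightarrow> degen d H (\<Theta>\<^sub>2 t) \<subseteq> degen d H (\<Theta>\<^sub>2 s)"
    and t\<^sub>0: "t\<^sub>0 \<ge> 0" and meet: "\<Theta>\<^sub>1 t\<^sub>0 = \<Theta>\<^sub>2 t\<^sub>0"
  shows "\<exists>\<eta>>0. \<exists>L. \<forall>s. t\<^sub>0 \<le> s \<longrightarrow> s < t\<^sub>0 + \<eta> \<longrightarrow>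
    (\<forall>m\<in>{1..pdim d H}. \<bar>G (\<Theta>\<^sub>1 s) m - G (\<Theta>\<^sub>2 s) m\<bar> \<le> L * l1_dist (pdim d H) (\<Theta>\<^sub>1 s) (\<Theta>\<^sub>2 s))"
proof -
  obtain \<delta> L where \<delta>: "\<delta> > 0"
    and L: "\<And>\<phi> \<psi> k. l1_dist (pdim d H) (\<Theta>\<^sub>1 t\<^sub>0) \<phi> \<le> \<delta> \<Longrightarrow> l1_dist (pdim d H) (\<Theta>\<^sub>1 t\<^sub>0) \<psi> \<le> \<delta> \<Longrightarrow>
      degen d H (\<Theta>\<^sub>1 t\<^sub>0) \<subseteq> degen d H \<phi> \<inter> degen d H \<psi> \<Longrightarrow>
      \<bar>relu_gradient d H a b f p \<phi> k - relu_gradient d H a b f p \<psi> k\<bar> \<le> L * l1_dist (pdim d H) \<phi> \<psi>"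
    using relu_gradient_locally_lipschitz[OF ab f_cont p_meas p_bdd] by blast
  obtain \<eta>\<^sub>1 where \<eta>\<^sub>1: "\<eta>\<^sub>1 > 0" "\<And>s. s \<ge> 0 \<Longrightarrow> \<bar>s - t\<^sub>0\<bar> < \<eta>\<^sub>1 \<Longrightarrow> l1_dist (pdim d H) (\<Theta>\<^sub>1 t\<^sub>0) (\<Theta>\<^sub>1 s) \<le> \<delta>"
    using continuous_on_l1_dist_near[OF cont(1) t\<^sub>0 \<delta>] by blast
  obtain \<eta>\<^sub>2 where \<eta>\<^sub>2: "\<eta>\<^sub>2 > 0" "\<And>s. s \<ge> 0 \<Longrightarrow> \<bar>s - t\<^sub>0\<bar> < \<eta>\<^sub>2 \<Longrightarrow> l1_dist (pdim d H) (\<Theta>\<^sub>2 t\<^sub>0) (\<Theta>\<^sub>2 s) \<le> \<delta>"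
    using continuous_on_l1_dist_near[OF cont(2) t\<^sub>0 \<delta>] by blast
  have lip: "\<bar>G (\<Theta>\<^sub>1 s) m - G (\<Theta>\<^sub>2 s) m\<bar> \<le> L * l1_dist (pdim d H) (\<Theta>\<^sub>1 s) (\<Theta>\<^sub>2 s)"
    if s: "t\<^sub>0 \<le> s" "s < t\<^sub>0 + min \<eta>\<^sub>1 \<eta>\<^sub>2" and m: "m \<in> {1..pdim d H}" for s m
  proof -
    have "s \<ge> 0" using s t\<^sub>0 by linarith
    then have "G (\<Theta>\<^sub>1 s) m - G (\<Theta>\<^sub>2 s) m
        = relu_gradient d H a b f p (\<Theta>\<^sub>1 s) m - relu_gradient d H a b f p (\<Theta>\<^sub>2 s) m"
      using space m by (simp add: G)
    also have "\<bar>\<dots>\<bar> \<le> L * l1_dist (pdim d H) (\<Theta>\<^sub>1 s) (\<Theta>\<^sub>2 s)"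
      using s t\<^sub>0 meet degen_mono[OF t\<^sub>0 s(1)] \<eta>\<^sub>1(2)[of s] \<eta>\<^sub>2(2)[of s] by (intro L) auto
    finally show ?thesis .
  qed
  show ?thesis
  proof (rule exI[of _ "min \<eta>\<^sub>1 \<eta>\<^sub>2"], intro conjI exI[of _ L])
    show "min \<eta>\<^sub>1 \<eta>\<^sub>2 > 0" using \<eta>\<^sub>1 \<eta>\<^sub>2 by simp
  qed (use lip in auto)
qed

section \<open>Uniqueness for the integral equation\<close>

lemma continuation_of_zero:
  fixes e :: "real \<Rightarrow> real"
  assumes cont: "continuous_on {0..} e" and zero: "e 0 = 0"
    and step: "\<And>t\<^sub>0. t\<^sub>0 \<ge> 0 \<Longrightarrow> \<forall>u\<in>{0..t\<^sub>0}. e u = 0 \<Longrightarrow> \<exists>\<tau>>0. \<forall>s\<in>{t\<^sub>0..t\<^sub>0 + \<tau>}. e s = 0"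
    and t: "t \<ge> 0"
  shows "e t = 0"
proof (rule ccontr)
  assume "e t \<noteq> 0"
  define S where "S = {t. 0 \<le> t \<and> e t \<noteq> 0}"
  define t\<^sub>0 where "t\<^sub>0 = Inf S"
  have S: "t \<in> S" "bdd_below S" unfolding S_def using t \<open>e t \<noteq> 0\<close> by (auto intro: bdd_belowI[of _ 0])
  then have t\<^sub>0: "t\<^sub>0 \<ge> 0" unfolding t\<^sub>0_def by (intro cInf_greatest) (auto simp: S_def)
  have before: "e u = 0" if "0 \<le> u" "u < t\<^sub>0" for u
    using that cInf_lower[OF _ S(2), of u] unfolding S_def t\<^sub>0_def by force
  have "e t\<^sub>0 = 0"
  proof (rule ccontr)
    assume "e t\<^sub>0 \<noteq> 0"
    then have "t\<^sub>0 > 0" using t\<^sub>0 zero by (cases "t\<^sub>0 = 0") auto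
    obtain \<delta> where \<delta>: "\<delta> > 0" "\<forall>u\<in>{0..}. dist u t\<^sub>0 < \<delta> \<longrightarrow> dist (e u) (e t\<^sub>0) < \<bar>e t\<^sub>0\<bar>"
      using cont t\<^sub>0 \<open>e t\<^sub>0 \<noteq> 0\<close> unfolding continuous_on_iff by (metis atLeast_iff zero_less_abs_iff)
    define u where "u = max 0 (t\<^sub>0 - \<delta> / 2)"
    have "0 \<le> u" "u < t\<^sub>0" "dist u t\<^sub>0 < \<delta>"
      unfolding u_def using \<delta>(1) \<open>t\<^sub>0 > 0\<close> by (auto simp: dist_real_def)
    then show False using \<delta>(2)[rule_format, of u] before[of u] by (auto simp: dist_real_def)
  qed
  then obtain \<tau> where "\<tau> > 0" and after: "\<forall>s\<in>{t\<^sub>0..t\<^sub>0 + \<tau>}. e s = 0"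
    using step[OF t\<^sub>0] before t\<^sub>0 by (metis atLeastAtMost_iff order_le_less)
  then obtain s where "s \<in> S" "s < t\<^sub>0 + \<tau>"
    using cInf_less_iff[of S "t\<^sub>0 + \<tau>"] S unfolding t\<^sub>0_def by fastforce
  moreover have "t\<^sub>0 \<le> s" unfolding t\<^sub>0_def by (rule cInf_lower[OF \<open>s \<in> S\<close> S(2)])
  ultimately show False using after unfolding S_def by auto
qed

definition integral_solution ::
  "nat \<Rightarrow> ((nat \<Rightarrow> real) \<Rightarrow> nat \<Rightarrow> real) \<Rightarrow> (nat \<Rightarrow> real) \<Rightarrow> (real \<Rightarrow> nat \<Rightarrow> real) \<Rightarrow> bool" where
  "integral_solution n G \<theta> X \<longleftrightarrow> (\<forall>t\<ge>0. \<forall>m\<in>{1..n}.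
     set_integrable lborel {0..t} (\<lambda>u. G (X u) m) \<and>
     X t m = \<theta> m - set_lebesgue_integral lborel {0..t} (\<lambda>u. G (X u) m))"

lemma integral_solution_start:
  assumes "integral_solution n G \<theta> X" "m \<in> {1..n}"
  shows "X 0 m = \<theta> m"
proof -
  have "set_lebesgue_integral lborel {0..0} (\<lambda>u. G (X u) m) = 0"
    unfolding set_lebesgue_integral_def
    by (rule integral_eq_zero_AE) (use AE_lborel_singleton[of 0] in \<open>auto elim!: eventually_mono\<close>)
  then show ?thesis using assms unfolding integral_solution_def by force
qed

lemma integral_solution_diff_le:
  assumes X: "integral_solution n G \<theta> X" and Y: "integral_solution n G \<theta> Y"
    and m: "m \<in> {1..n}" and t: "t\<^sub>0 \<le> t" "0 \<le> t\<^sub>0"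
    and agree: "\<forall>u\<in>{0..t\<^sub>0}. X u = Y u"
    and bound: "\<And>u. u \<in> {t\<^sub>0..t} \<Longrightarrow> \<bar>G (X u) m - G (Y u) m\<bar> \<le> B" and B: "B \<ge> 0"
  shows "\<bar>X t m - Y t m\<bar> \<le> (t - t\<^sub>0) * B"
proof -
  define h where "h u = G (X u) m - G (Y u) m" for u
  have int: "set_integrable lborel {0..t} (\<lambda>u. G (X u) m)" "set_integrable lborel {0..t} (\<lambda>u. G (Y u) m)"
    using X Y m t unfolding integral_solution_def by auto
  have "\<bar>X t m - Y t m\<bar> = \<bar>set_lebesgue_integral lborel {0..t} h\<bar>"
    using X Y m t set_integral_diff(2)[OF int] unfolding integral_solution_def h_def by auto
  also have "\<dots> \<le> (\<integral>u. indicator {t\<^sub>0..t} u * B \<partial>lborel)"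
    unfolding set_lebesgue_integral_def
  proof (rule abs_integral_le_integral)
    show "integrable lborel (\<lambda>u. indicator {0..t} u *\<^sub>R h u)"
      using set_integral_diff(1)[OF int] unfolding h_def set_integrable_def .
    show "integrable lborel (\<lambda>u. indicator {t\<^sub>0..t} u * B)"
      by (intro integrable_mult_left integrable_real_indicator) (auto simp: emeasure_lborel_Icc_eq)
    show "\<bar>indicator {0..t} u *\<^sub>R h u\<bar> \<le> indicator {t\<^sub>0..t} u * B" for u
      using agree bound[of u] B by (cases "u \<le> t\<^sub>0") (auto simp: h_def split: split_indicator)
  qed
  also have "\<dots> = (t - t\<^sub>0) * B" using t by simp
  finally show ?thesis .
qed

lemma integral_solution_local_uniqueness:
  fixes X Y :: "real \<Rightarrow> nat \<Rightarrow> real"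
  assumes X: "integral_solution n G \<theta> X" and Y: "integral_solution n G \<theta> Y"
    and cont: "continuous_on {0..} (\<lambda>t. l1_dist n (X t) (Y t))"
    and t\<^sub>0: "t\<^sub>0 \<ge> 0" and agree: "\<forall>u\<in>{0..t\<^sub>0}. X u = Y u" and \<eta>: "\<eta> > 0"
    and lip: "\<And>s m. t\<^sub>0 \<le> s \<Longrightarrow> s < t\<^sub>0 + \<eta> \<Longrightarrow> m \<in> {1..n} \<Longrightarrow>
      \<bar>G (X s) m - G (Y s) m\<bar> \<le> L * l1_dist n (X s) (Y s)"
  shows "\<exists>\<tau>>0. \<forall>s\<in>{t\<^sub>0..t\<^sub>0 + \<tau>}. l1_dist n (X s) (Y s) = 0"
proof -
  define e where "e t = l1_dist n (X t) (Y t)" for t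
  define L' where "L' = max L 0"
  \<comment> \<open>\<tau> is so small that the largest discrepancy M on [t0, t0 + \<tau>] satisfies M \<le> n L' \<tau> M \<le> M / 2.\<close>
  define \<tau> where "\<tau> = min (\<eta> / 2) (1 / (2 * (real n * L' + 1)))"
  have L': "L' \<ge> 0" unfolding L'_def by simp
  have nL: "real n * L' \<ge> 0" using L' by simp
  then have \<tau>: "\<tau> > 0" "\<tau> < \<eta>" unfolding \<tau>_def using \<eta> by auto
  have n\<tau>: "real n * L' * \<tau> \<le> 1 / 2"
  proof -
    have "real n * L' * \<tau> \<le> real n * L' * (1 / (2 * (real n * L' + 1)))"
      unfolding \<tau>_def using L' by (intro mult_left_mono) auto
    also have "\<dots> \<le> 1 / 2" using nL by (simp add: field_simps)
    finally show ?thesis .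
  qed
  obtain t\<^sub>m where t\<^sub>m: "t\<^sub>m \<in> {t\<^sub>0..t\<^sub>0 + \<tau>}" and max: "\<And>s. s \<in> {t\<^sub>0..t\<^sub>0 + \<tau>} \<Longrightarrow> e s \<le> e t\<^sub>m"
    using continuous_attains_sup[of "{t\<^sub>0..t\<^sub>0 + \<tau>}" e] continuous_on_subset[OF cont, of "{t\<^sub>0..t\<^sub>0 + \<tau>}"] \<tau> t\<^sub>0
    unfolding e_def by fastforce
  define M where "M = e t\<^sub>m"
  have M: "M \<ge> 0" unfolding M_def e_def by (rule l1_dist_nonneg)
  have half: "e t \<le> M / 2" if t: "t \<in> {t\<^sub>0..t\<^sub>0 + \<tau>}" for t
  proof -
    have "\<bar>X t m - Y t m\<bar> \<le> (t - t\<^sub>0) * (L' * M)" if m: "m \<in> {1..n}" for m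
    proof (rule integral_solution_diff_le[OF X Y m _ t\<^sub>0 agree])
      show "\<bar>G (X u) m - G (Y u) m\<bar> \<le> L' * M" if "u \<in> {t\<^sub>0..t}" for u
      proof -
        have "\<bar>G (X u) m - G (Y u) m\<bar> \<le> L * e u" unfolding e_def using that t \<tau> m by (intro lip) auto
        also have "\<dots> \<le> L' * M"
          unfolding L'_def M_def using max[of u] that t l1_dist_nonneg[of n "X u" "Y u"]
          by (intro order_trans[OF mult_right_mono mult_left_mono]) (auto simp: e_def)
        finally show ?thesis .
      qed
    qed (use t L' M in auto)
    then have "e t \<le> (\<Sum>m=1..n. \<tau> * (L' * M))"
      unfolding e_def l1_dist_def using t L' M
      by (intro sum_mono order_trans[OF _ mult_right_mono[of "t - t\<^sub>0" \<tau>]]) auto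
    also have "\<dots> = (real n * L' * \<tau>) * M" by simp
    also have "\<dots> \<le> M / 2" using mult_right_mono[OF n\<tau> M] by simp
    finally show ?thesis .
  qed
  have "M = 0" using half[OF t\<^sub>m] M unfolding M_def by linarith
  then have "l1_dist n (X s) (Y s) = 0" if "s \<in> {t\<^sub>0..t\<^sub>0 + \<tau>}" for s
    using max[OF that] l1_dist_nonneg[of n "X s" "Y s"] unfolding M_def e_def by linarith
  then show ?thesis using \<tau>(1) by blast
qed

lemma integral_solution_unique:
  fixes X Y :: "real \<Rightarrow> nat \<Rightarrow> real"
  assumes X: "integral_solution n G \<theta> X" and Y: "integral_solution n G \<theta> Y"
    and cont: "\<forall>m\<in>{1..n}. continuous_on {0..} (\<lambda>t. X t m)" "\<forall>m\<in>{1..n}. continuous_on {0..} (\<lambda>t. Y t m)"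
    and space: "\<And>t. t \<ge> 0 \<Longrightarrow> X t \<in> param_space n \<and> Y t \<in> param_space n"
    and lip: "\<And>t\<^sub>0. t\<^sub>0 \<ge> 0 \<Longrightarrow> X t\<^sub>0 = Y t\<^sub>0 \<Longrightarrow> \<exists>\<eta>>0. \<exists>L. \<forall>s. t\<^sub>0 \<le> s \<longrightarrow> s < t\<^sub>0 + \<eta> \<longrightarrow>
      (\<forall>m\<in>{1..n}. \<bar>G (X s) m - G (Y s) m\<bar> \<le> L * l1_dist n (X s) (Y s))"
    and t: "t \<ge> 0"
  shows "X t = Y t"
proof -
  have dist_cont: "continuous_on {0..} (\<lambda>t. l1_dist n (X t) (Y t))"
    by (rule continuous_on_l1_dist[OF cont])
  have eq: "X u = Y u" if "u \<ge> 0" "l1_dist n (X u) (Y u) = 0" for u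
    using l1_dist_eq_0_imp_eq space that by blast
  have "l1_dist n (X t) (Y t) = 0"
  proof (rule continuation_of_zero[OF dist_cont _ _ t])
    show "l1_dist n (X 0) (Y 0) = 0"
      unfolding l1_dist_def using integral_solution_start[OF X] integral_solution_start[OF Y] by simp
  next
    fix t\<^sub>0 :: real assume t\<^sub>0: "t\<^sub>0 \<ge> 0" and "\<forall>u\<in>{0..t\<^sub>0}. l1_dist n (X u) (Y u) = 0"
    then have agree: "\<forall>u\<in>{0..t\<^sub>0}. X u = Y u" using eq by auto
    then obtain \<eta> L where "\<eta> > 0" "\<forall>s. t\<^sub>0 \<le> s \<longrightarrow> s < t\<^sub>0 + \<eta> \<longrightarrow>
        (\<forall>m\<in>{1..n}. \<bar>G (X s) m - G (Y s) m\<bar> \<le> L * l1_dist n (X s) (Y s))"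
      using lip[OF t\<^sub>0] t\<^sub>0 by auto
    then show "\<exists>\<tau>>0. \<forall>s\<in>{t\<^sub>0..t\<^sub>0 + \<tau>}. l1_dist n (X s) (Y s) = 0"
      by (intro integral_solution_local_uniqueness[OF X Y dist_cont t\<^sub>0 agree, where L=L]) auto
  qed
  then show ?thesis using eq t by blast
qed

theorem lemma3p2:
  fixes d H :: nat and a b :: real
    and f p :: "(nat \<Rightarrow> real) \<Rightarrow> real"
    and R :: "nat \<Rightarrow> real \<Rightarrow> real"
    and G :: "(nat \<Rightarrow> real) \<Rightarrow> nat \<Rightarrow> real"
    and \<theta> :: "nat \<Rightarrow> real"
    and \<Theta> :: "nat \<Rightarrow> real \<Rightarrow> (nat \<Rightarrow> real)"
  assumes d_pos: "d \<ge> 1" and H_pos: "H \<ge> 1" and ab: "a < b"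
    and f_cont: "continuous_on (cube d a b) f"
    and p_meas: "p \<in> borel_measurable (restrict_space (lebd d) (cube d a b))"
    and p_bdd: "bounded (p ` cube d a b)"
    and p_nonneg: "\<forall>y\<in>cube d a b. p y \<ge> 0"
    and R_C1: "\<forall>r\<ge>1. (\<forall>x. R r differentiable (at x)) \<and> continuous_on UNIV (deriv (R r))"
    and R_lim: "\<forall>x. (\<lambda>r. \<bar>R r x - max x 0\<bar> + \<bar>deriv (R r) x - indicator {0<..} x\<bar>)
                     \<longlonglongrightarrow> 0"
    and R_bdd: "\<forall>x. \<exists>C. \<forall>r\<ge>1. \<forall>y\<in>{-\<bar>x\<bar>..\<bar>x\<bar>}. \<bar>deriv (R r) y\<bar> \<le> C"
    and G_def: "\<forall>\<phi>\<in>param_space (pdim d H).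
        (\<exists>g. \<forall>i\<in>{1..pdim d H}.
            (\<lambda>r. grad (smooth_risk d H a b f p (R r)) \<phi> i) \<longlonglongrightarrow> g i) \<longrightarrow>
        (\<forall>i\<in>{1..pdim d H}.
            (\<lambda>r. grad (smooth_risk d H a b f p (R r)) \<phi> i) \<longlonglongrightarrow> G \<phi> i)"
    and \<theta>_sp: "\<theta> \<in> param_space (pdim d H)"
    and \<Theta>_sp: "\<forall>k\<in>{1,2}. \<forall>t\<ge>0. \<Theta> k t \<in> param_space (pdim d H)"
    and \<Theta>_cont: "\<forall>k\<in>{1,2}. \<forall>i\<in>{1..pdim d H}. continuous_on {0..} (\<lambda>t. \<Theta> k t i)"
    and \<Theta>_ode: "\<forall>k\<in>{1,2}. \<forall>t\<ge>0. \<forall>i\<in>{1..pdim d H}.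
        set_integrable lborel {0..t} (\<lambda>u. G (\<Theta> k u) i) \<and>
        \<Theta> k t i = \<theta> i - set_lebesgue_integral lborel {0..t} (\<lambda>u. G (\<Theta> k u) i)"
    and \<Theta>_degen: "\<forall>k\<in>{1,2}. \<forall>t\<ge>0. \<forall>s\<ge>t.
        degen d H (\<Theta> k t) \<subseteq> degen d H (\<Theta> k s)"
  shows "\<forall>t\<ge>0. \<Theta> 1 t = \<Theta> 2 t"
proof -
  let ?n = "pdim d H"
  obtain P where P: "\<And>y. y \<in> cube d a b \<Longrightarrow> \<bar>p y\<bar> \<le> P"
    using p_bdd unfolding bounded_iff by auto
  have G: "\<And>\<phi> k. \<phi> \<in> param_space ?n \<Longrightarrow> k \<in> {1..?n} \<Longrightarrow> G \<phi> k = relu_gradient d H a b f p \<phi> k"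
    by (rule limit_gradient_eq_relu_gradient[OF f_cont p_meas P R_C1 R_lim R_bdd G_def])
  have solution: "integral_solution ?n G \<theta> (\<Theta> 1)" "integral_solution ?n G \<theta> (\<Theta> 2)"
    using \<Theta>_ode unfolding integral_solution_def by blast+
  have space: "\<Theta> 1 t \<in> param_space ?n \<and> \<Theta> 2 t \<in> param_space ?n" if "t \<ge> 0" for t
    using \<Theta>_sp that by simp
  have cont: "\<forall>m\<in>{1..?n}. continuous_on {0..} (\<lambda>t. \<Theta> 1 t m)" "\<forall>m\<in>{1..?n}. continuous_on {0..} (\<lambda>t. \<Theta> 2 t m)"
    using \<Theta>_cont by simp_all
  have degen_mono: "degen d H (\<Theta> 1 t) \<subseteq> degen d H (\<Theta> 1 s)" "degen d H (\<Theta> 2 t) \<subseteq> degen d H (\<Theta> 2 s)"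
    if "0 \<le> t" "t \<le> s" for t s
    using \<Theta>_degen that by simp_all
  show ?thesis
    using integral_solution_unique[OF solution cont space relu_gradient_lipschitz_along_trajectories
        [OF less_imp_le[OF ab] f_cont p_meas P G space cont degen_mono]] by blast
qed

end
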